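(* Let $X_1,\ldots,X_k\in\mathbf{M}_{2N}(\mathbb{C})$ commute pairwise and satisfy $X_j^{*}=X_j^{\sharp}$ for all $j$. (1) There is a single symplectic unitary $U$ such that for all $j$, \[U^{*}X_jU=\begin{bmatrix}T_j & S_j\\ -\overline{S_j} & \overline{T_j}\end{bmatrix}\] with each $T_j$ upper-triangular and each $S_j$ strictly upper-triangular ($N\times N$ blocks). (2) If, in addition, the $X_j$ are normal, then there is a single symplectic unitary $U$ such that for all $j$, \[U^{*}X_jU=\begin{bmatrix}D_j & 0\\ 0 & \overline{D_j}\end{bmatrix}\] with each $D_j$ diagonal. (3) Every symplectic unitary has determinant one.
   Context: For $X\in\mathbf{M}_{2N}(\mathbb{C})$ written in $N\times N$ blocks $X=\begin{bmatrix}A&B\\C&D\end{bmatrix}$, the dual operation is $X^{\sharp}=\begin{bmatrix}D^{\mathrm T}&-B^{\mathrm T}\\-C^{\mathrm T}&A^{\mathrm T}\end{bmatrix}$, equivalently $X^\sharp=-ZX^{\mathrm T}Z$ where $Z=\begin{bmatrix}0&I\\-I&0\end{bmatrix}$. A symplectic unitary is a unitary $U\in\mathbf{M}_{2N}(\mathbb{C})$ with $U^{\mathrm T}ZU=Z$. $\overline{M}$ denotes the entrywise complex conjugate. *)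

theory Defs
  imports "Jordan_Normal_Form.Matrix" "Jordan_Normal_Form.Determinant" Complex_Main
begin

definition conj_mat :: "complex mat \<Rightarrow> complex mat" where
  "conj_mat M = map_mat cnj M"

definition ctrans_mat :: "complex mat \<Rightarrow> complex mat" where
  "ctrans_mat M = transpose_mat (conj_mat M)"

definition Zmat :: "nat \<Rightarrow> complex mat" where
  "Zmat N = four_block_mat (0\<^sub>m N N) (1\<^sub>m N) (- 1\<^sub>m N) (0\<^sub>m N N)"

definition sharp :: "nat \<Rightarrow> complex mat \<Rightarrow> complex mat" where
  "sharp N X = - (Zmat N * transpose_mat X * Zmat N)"

definition unitary_mat :: "nat \<Rightarrow> complex mat \<Rightarrow> bool" where
  "unitary_mat n U \<longleftrightarrow> U \<in> carrier_mat n n \<and> ctrans_mat U * U = 1\<^sub>m n \<and> U * ctrans_mat U = 1\<^sub>m n"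

definition symplectic_unitary :: "nat \<Rightarrow> complex mat \<Rightarrow> bool" where
  "symplectic_unitary N U \<longleftrightarrow> unitary_mat (2 * N) U \<and> transpose_mat U * Zmat N * U = Zmat N"

definition normal_mat :: "complex mat \<Rightarrow> bool" where
  "normal_mat X \<longleftrightarrow> X * ctrans_mat X = ctrans_mat X * X"

definition strictly_upper_triangular :: "'a::zero mat \<Rightarrow> bool" where
  "strictly_upper_triangular A \<longleftrightarrow> (\<forall>i < dim_row A. \<forall>j \<le> i. j < dim_col A \<longrightarrow> A $$ (i,j) = 0)"

end

theory Submission
  imports Defs "Jordan_Normal_Form.Schur_Decomposition"
begin

text \<open>The map \<open>J v = Z\<^sup>T (cnj v)\<close> (entrywise conjugate) is antiunitary with \<open>J\<^sup>2 = -1\<close>,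
  \<open>X\<^sup>* = X\<^sup>\<sharp>\<close> says that \<open>X\<close> commutes with \<open>J\<close>, and a unitary is symplectic exactly when its
  columns are \<open>u\<^sub>1, \<dots>, u\<^sub>N, J u\<^sub>1, \<dots>, J u\<^sub>N\<close>. Such a basis is built one vector at a time: the
  orthogonal complement of \<open>span {u\<^sub>c, J u\<^sub>c | c < m}\<close> is invariant under every \<open>X\<^sub>j\<^sup>*\<close>, so the
  compressions of the \<open>X\<^sub>j\<close> to it commute and have a common unit eigenvector \<open>u\<^sub>m\<close>. Then
  \<open>X\<^sub>j u\<^sub>b \<in> span {u\<^sub>c, J u\<^sub>c | c < b} + \<complex> u\<^sub>b\<close>, which together with \<open>X\<^sub>j J = J X\<^sub>j\<close> is the
  block-triangular form. For normal \<open>X\<^sub>j\<close> the eigenvectors of \<open>X\<^sub>j\<close> are eigenvectors of \<open>X\<^sub>j\<^sup>*\<close>,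
  which kills the off-diagonal part. A symplectic unitary \<open>U\<close> is itself normal with
  \<open>U\<^sup>* = U\<^sup>\<sharp>\<close>; its diagonal form shows \<open>det U = |det D|\<^sup>2 > 0\<close>, and \<open>|det U| = 1\<close>.\<close>

lemma sum_lessThan_double:
  fixes N :: nat shows "(\<Sum>i<2*N. f i) = (\<Sum>i<N. f i) + (\<Sum>i<N. f (i+N))"
proof -
  have "(\<Sum>i<2*N. f i) = (\<Sum>i\<in>{0..<N}. f i) + (\<Sum>i\<in>{N..<N+N}. f i)"
    by (simp add: mult_2 lessThan_atLeast0 sum.atLeastLessThan_concat)
  also have "(\<Sum>i\<in>{N..<N+N}. f i) = (\<Sum>i\<in>{0..<N}. f (i+N))"
    using sum.shift_bounds_nat_ivl[of f 0 N N] by simp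
  finally show ?thesis by (simp add: lessThan_atLeast0)
qed

lemma row_scalar_prod_sum:
  "A \<in> carrier_mat n m \<Longrightarrow> v \<in> carrier_vec m \<Longrightarrow> i < n \<Longrightarrow>
   row A i \<bullet> v = (\<Sum>l<m. A $$ (i,l) * v $ l)"
  by (auto simp: scalar_prod_def lessThan_atLeast0 intro!: sum.cong)

lemma index_mult_mat_vec_sum:
  "A \<in> carrier_mat n m \<Longrightarrow> v \<in> carrier_vec m \<Longrightarrow> i < n \<Longrightarrow>
   (A *\<^sub>v v) $ i = (\<Sum>l<m. A $$ (i,l) * v $ l)"
  by (simp add: row_scalar_prod_sum)

lemma index_mult_mat_sum:
  "A \<in> carrier_mat n m \<Longrightarrow> B \<in> carrier_mat m p \<Longrightarrow> i < n \<Longrightarrow> j < p \<Longrightarrow>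
   (A * B) $$ (i,j) = (\<Sum>k<m. A $$ (i,k) * B $$ (k,j))"
  by (auto simp: scalar_prod_def lessThan_atLeast0 intro!: sum.cong)

definition cinner :: "nat \<Rightarrow> complex vec \<Rightarrow> complex vec \<Rightarrow> complex" where
  "cinner n u v = (\<Sum>i<n. cnj (u$i) * v$i)"

lemma cinner_commute: "cinner n u v = cnj (cinner n v u)"
  unfolding cinner_def by (simp add: cnj_sum mult.commute)

lemma cinner_add_right:
  "v \<in> carrier_vec n \<Longrightarrow> w \<in> carrier_vec n \<Longrightarrow> cinner n s (v + w) = cinner n s v + cinner n s w"
  by (simp add: cinner_def algebra_simps sum.distrib)

lemma cinner_diff_right:
  "v \<in> carrier_vec n \<Longrightarrow> w \<in> carrier_vec n \<Longrightarrow> cinner n s (v - w) = cinner n s v - cinner n s w"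
  by (simp add: cinner_def algebra_simps sum_subtractf)

lemma cinner_smult_right: "v \<in> carrier_vec n \<Longrightarrow> cinner n s (a \<cdot>\<^sub>v v) = a * cinner n s v"
  by (simp add: cinner_def algebra_simps sum_distrib_left)

lemma cinner_add_left:
  "v \<in> carrier_vec n \<Longrightarrow> w \<in> carrier_vec n \<Longrightarrow> cinner n (v + w) s = cinner n v s + cinner n w s"
  by (simp add: cinner_def algebra_simps sum.distrib)

lemma cinner_smult_left: "v \<in> carrier_vec n \<Longrightarrow> cinner n (a \<cdot>\<^sub>v v) s = cnj a * cinner n v s"
  by (simp add: cinner_def algebra_simps sum_distrib_left)

lemma cinner_self: "cinner n v v = of_real (\<Sum>i<n. (cmod (v$i))^2)"
  unfolding cinner_def of_real_sum
  by (intro sum.cong refl) (metis complex_norm_square mult.commute)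

lemma cinner_self_eq_0:
  assumes v: "v \<in> carrier_vec n" and z: "cinner n v v = 0" shows "v = 0\<^sub>v n"
proof -
  have "(\<Sum>i<n. (cmod (v$i))^2) = 0" using z by (simp only: cinner_self of_real_eq_0_iff)
  then have "\<forall>i\<in>{..<n}. (cmod (v$i))^2 = 0" by (subst (asm) sum_nonneg_eq_0_iff) auto
  then show ?thesis using v by (intro eq_vecI) auto
qed

lemma cinner_self_pos:
  assumes v: "v \<in> carrier_vec n" and nz: "v \<noteq> 0\<^sub>v n"
  shows "\<exists>r>0. cinner n v v = of_real r"
proof -
  have "(\<Sum>i<n. (cmod (v$i))^2) \<ge> 0" by (simp add: sum_nonneg)
  moreover have "(\<Sum>i<n. (cmod (v$i))^2) \<noteq> 0"
    using cinner_self_eq_0[OF v] nz unfolding cinner_self by (metis of_real_0)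
  ultimately show ?thesis unfolding cinner_self by (intro exI[of _ "\<Sum>i<n. (cmod (v$i))^2"]) simp
qed

lemma ctrans_mat_carrier[simp]: "A \<in> carrier_mat n m \<Longrightarrow> ctrans_mat A \<in> carrier_mat m n"
  by (simp add: ctrans_mat_def conj_mat_def)

lemma conj_mat_carrier[simp]: "A \<in> carrier_mat n m \<Longrightarrow> conj_mat A \<in> carrier_mat n m"
  by (simp add: conj_mat_def)

lemma dim_ctrans_mat[simp]:
  "dim_row (ctrans_mat A) = dim_col A" "dim_col (ctrans_mat A) = dim_row A"
  by (simp_all add: ctrans_mat_def conj_mat_def)

lemma index_ctrans_mat[simp]:
  "i < dim_col A \<Longrightarrow> j < dim_row A \<Longrightarrow> ctrans_mat A $$ (i,j) = cnj (A $$ (j,i))"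
  by (simp add: ctrans_mat_def conj_mat_def)

lemma cinner_adjoint_right:
  assumes A: "A \<in> carrier_mat n n" and y: "y \<in> carrier_vec n" and z: "z \<in> carrier_vec n"
  shows "cinner n z (A *\<^sub>v y) = cinner n (ctrans_mat A *\<^sub>v z) y"
proof -
  have "cinner n z (A *\<^sub>v y) = (\<Sum>i<n. \<Sum>l<n. cnj (z$i) * A$$(i,l) * y$l)"
    unfolding cinner_def
    by (intro sum.cong refl) (simp add: index_mult_mat_vec_sum[OF A y] sum_distrib_left mult.assoc)
  also have "\<dots> = (\<Sum>l<n. \<Sum>i<n. cnj (z$i) * A$$(i,l) * y$l)" by (rule sum.swap)
  also have "\<dots> = cinner n (ctrans_mat A *\<^sub>v z) y"
    unfolding cinner_def
    by (intro sum.cong refl, subst index_mult_mat_vec_sum[OF ctrans_mat_carrier[OF A] z])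
       (auto simp: carrier_matD[OF A] cnj_sum sum_distrib_right intro!: sum.cong)
  finally show ?thesis .
qed

lemma cinner_adjoint_left:
  assumes "A \<in> carrier_mat n n" "y \<in> carrier_vec n" "z \<in> carrier_vec n"
  shows "cinner n (A *\<^sub>v y) z = cinner n y (ctrans_mat A *\<^sub>v z)"
  using cinner_adjoint_right[OF assms] cinner_commute by metis

section \<open>The quaternionic structure\<close>

definition J_vec :: "nat \<Rightarrow> complex vec \<Rightarrow> complex vec" where
  "J_vec N v = vec (2*N) (\<lambda>i. if i < N then - cnj (v $ (i+N)) else cnj (v $ (i-N)))"

definition quaternionic_mat :: "nat \<Rightarrow> complex mat \<Rightarrow> bool" where
  "quaternionic_mat N X \<longleftrightarrow> X \<in> carrier_mat (2*N) (2*N) \<and>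
     (\<forall>i<N. \<forall>l<N. X$$(i+N,l+N) = cnj (X$$(i,l)) \<and> X$$(i+N,l) = - cnj (X$$(i,l+N)))"

lemma J_vec_carrier[simp]: "J_vec N v \<in> carrier_vec (2*N)"
  and dim_J_vec[simp]: "dim_vec (J_vec N v) = 2*N"
  by (auto simp: J_vec_def)

lemma index_J_vec_low[simp]: "i < N \<Longrightarrow> J_vec N v $ i = - cnj (v $ (i+N))"
  and index_J_vec_high[simp]: "i < N \<Longrightarrow> J_vec N v $ (i+N) = cnj (v $ i)"
  by (simp_all add: J_vec_def)

lemma J_vec_smult: "v \<in> carrier_vec (2*N) \<Longrightarrow> J_vec N (c \<cdot>\<^sub>v v) = cnj c \<cdot>\<^sub>v J_vec N v"
  by (intro eq_vecI) (auto simp: J_vec_def)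

lemma cinner_J_J: "cinner (2*N) (J_vec N u) (J_vec N w) = cinner (2*N) w u"
  unfolding cinner_def sum_lessThan_double by (simp add: algebra_simps)

lemma cinner_J_self: "cinner (2*N) (J_vec N u) u = 0"
  unfolding cinner_def sum_lessThan_double by (simp add: algebra_simps sum_negf)

lemma cinner_J_right: "cinner (2*N) u (J_vec N w) = - cnj (cinner (2*N) (J_vec N u) w)"
  unfolding cinner_def sum_lessThan_double by (simp add: algebra_simps cnj_sum sum_negf)

lemma cinner_J_left: "cinner (2*N) (J_vec N s) w = - cnj (cinner (2*N) s (J_vec N w))"
  using cinner_J_right[of N s w] by simp

lemma cinner_J_J_left: "cinner (2*N) (J_vec N (J_vec N u)) w = - cinner (2*N) u w"
proof -
  have "\<And>i. i < 2*N \<Longrightarrow> J_vec N (J_vec N u) $ i = - u $ i"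
    by (case_tac "i < N") (auto simp: J_vec_def)
  then show ?thesis by (simp add: cinner_def sum_negf)
qed

lemma cinner_J_expand:
  "cinner (2*N) (J_vec N x) y = (\<Sum>l<N. - x$(l+N) * y$l) + (\<Sum>l<N. x$l * y$(l+N))"
  unfolding cinner_def sum_lessThan_double by simp

lemma quaternionic_mat_carrier: "quaternionic_mat N X \<Longrightarrow> X \<in> carrier_mat (2*N) (2*N)"
  by (simp add: quaternionic_mat_def)

lemma quaternionic_mult_J_vec:
  assumes q: "quaternionic_mat N X" and v: "v \<in> carrier_vec (2*N)"
  shows "X *\<^sub>v J_vec N v = J_vec N (X *\<^sub>v v)"
proof (rule eq_vecI)
  from q have X: "X \<in> carrier_mat (2*N) (2*N)" and
    q1: "\<And>i l. i<N \<Longrightarrow> l<N \<Longrightarrow> X$$(i+N,l+N) = cnj (X$$(i,l))" and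
    q2: "\<And>i l. i<N \<Longrightarrow> l<N \<Longrightarrow> X$$(i+N,l) = - cnj (X$$(i,l+N))"
    unfolding quaternionic_mat_def by auto
  show "dim_vec (X *\<^sub>v J_vec N v) = dim_vec (J_vec N (X *\<^sub>v v))" using X by simp
  fix i assume "i < dim_vec (J_vec N (X *\<^sub>v v))"
  hence i: "i < 2*N" by simp
  show "(X *\<^sub>v J_vec N v) $ i = J_vec N (X *\<^sub>v v) $ i"
  proof (cases "i < N")
    case True
    have "(X *\<^sub>v J_vec N v) $ i =
        (\<Sum>l<N. X$$(i,l) * (- cnj (v$(l+N)))) + (\<Sum>l<N. X$$(i,l+N) * cnj (v$l))"
      by (simp add: index_mult_mat_vec_sum[OF X _ i] sum_lessThan_double)
    moreover have "J_vec N (X *\<^sub>v v) $ i =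
        - cnj ((\<Sum>l<N. X$$(i+N,l) * v$l) + (\<Sum>l<N. X$$(i+N,l+N) * v$(l+N)))"
      using X True v by (simp add: row_scalar_prod_sum[OF X v, of "i+N"] sum_lessThan_double)
    ultimately show ?thesis using True q1 q2 by (simp add: sum_negf)
  next
    case False
    define i' where "i' = i - N"
    have ii: "i = i' + N" "i' < N" using False i unfolding i'_def by auto
    have "(X *\<^sub>v J_vec N v) $ i =
        (\<Sum>l<N. X$$(i'+N,l) * (- cnj (v$(l+N)))) + (\<Sum>l<N. X$$(i'+N,l+N) * cnj (v$l))"
      using ii by (subst index_mult_mat_vec_sum[OF X _ i]) (simp_all add: sum_lessThan_double)
    also have "\<dots> = (\<Sum>l<N. cnj (X$$(i',l+N)) * cnj (v$(l+N))) + (\<Sum>l<N. cnj (X$$(i',l)) * cnj (v$l))"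
      using ii q1 q2 by simp
    moreover have "J_vec N (X *\<^sub>v v) $ i =
        cnj ((\<Sum>l<N. X$$(i',l) * v$l) + (\<Sum>l<N. X$$(i',l+N) * v$(l+N)))"
      using X ii v by (simp add: row_scalar_prod_sum[OF X v, of i'] sum_lessThan_double)
    ultimately show ?thesis by (simp add: add.commute)
  qed
qed

lemma Zmat_carrier[simp]: "Zmat N \<in> carrier_mat (2*N) (2*N)"
  by (simp add: Zmat_def mult_2)

lemma dim_Zmat[simp]: "dim_row (Zmat N) = 2*N" "dim_col (Zmat N) = 2*N"
  using carrier_matD[OF Zmat_carrier[of N]] by auto

lemma index_Zmat: "i < 2*N \<Longrightarrow> j < 2*N \<Longrightarrow> Zmat N $$ (i,j) =
   (if i < N then (if j = i+N then 1 else 0) else (if i = j+N then -1 else 0))"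
  unfolding Zmat_def by (auto simp: mult_2)

lemma sum_mult_Zmat_right:
  assumes l: "l < 2*N"
  shows "(\<Sum>b<2*N. f b * Zmat N $$ (b,l)) = (if l < N then - f (l+N) else f (l-N))"
proof -
  have "(\<Sum>b<N. f b * Zmat N $$ (b,l)) = (\<Sum>b<N. if b = l - N then (if l < N then 0 else f b) else 0)"
    using l by (intro sum.cong) (auto simp: index_Zmat)
  moreover have "(\<Sum>b<N. f (b+N) * Zmat N $$ (b+N,l)) =
      (\<Sum>b<N. if b = l then (if l < N then - f (b+N) else 0) else 0)"
    using l by (intro sum.cong) (auto simp: index_Zmat)
  ultimately show ?thesis using l by (auto simp: sum_lessThan_double)
qed

lemma sum_mult_Zmat_left:
  assumes i: "i < 2*N"
  shows "(\<Sum>a<2*N. Zmat N $$ (i,a) * f a) = (if i < N then f (i+N) else - f (i-N))"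
proof -
  have "(\<Sum>a<N. Zmat N $$ (i,a) * f a) = (\<Sum>a<N. if a = i - N then (if i < N then 0 else - f a) else 0)"
    using i by (intro sum.cong) (auto simp: index_Zmat)
  moreover have "(\<Sum>a<N. Zmat N $$ (i,a+N) * f (a+N)) =
      (\<Sum>a<N. if a = i then (if i < N then f (a+N) else 0) else 0)"
    using i by (intro sum.cong) (auto simp: index_Zmat)
  ultimately show ?thesis using i by (auto simp: sum_lessThan_double)
qed

lemma Zmat_squared: "Zmat N * Zmat N = - 1\<^sub>m (2*N)"
proof (rule eq_matI)
  fix i l assume "i < dim_row (- 1\<^sub>m (2*N) :: complex mat)" "l < dim_col (- 1\<^sub>m (2*N) :: complex mat)"
  then have i: "i < 2*N" and l: "l < 2*N" by auto
  have "(Zmat N * Zmat N) $$ (i,l) = (if i < N then Zmat N $$ (i+N, l) else - Zmat N $$ (i-N, l))"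
    by (simp add: index_mult_mat_sum[OF Zmat_carrier Zmat_carrier i l] sum_mult_Zmat_left[OF i])
  then show "(Zmat N * Zmat N) $$ (i,l) = (- 1\<^sub>m (2*N)) $$ (i,l)" using i l by (auto simp: index_Zmat)
qed auto

lemma index_sharp:
  assumes X: "X \<in> carrier_mat (2*N) (2*N)" and i: "i < 2*N" and l: "l < 2*N"
  shows "sharp N X $$ (i,l) = (if l < N then (if i < N then X$$(l+N,i+N) else - X$$(l+N,i-N))
      else (if i < N then - X$$(l-N,i+N) else X$$(l-N,i-N)))"
proof -
  have ZX: "Zmat N * transpose_mat X \<in> carrier_mat (2*N) (2*N)" using X by auto
  have ZX_index: "\<And>b. b < 2*N \<Longrightarrow>
      (Zmat N * transpose_mat X) $$ (i,b) = (if i < N then X$$(b,i+N) else - X$$(b,i-N))"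
    using X i by (subst index_mult_mat_sum[OF Zmat_carrier _ i], auto simp: sum_mult_Zmat_left)
  have "(Zmat N * transpose_mat X * Zmat N) $$ (i,l) = (if l < N then - (Zmat N * transpose_mat X) $$ (i,l+N)
      else (Zmat N * transpose_mat X) $$ (i,l-N))"
    by (simp add: index_mult_mat_sum[OF ZX Zmat_carrier i l] sum_mult_Zmat_right[OF l])
  moreover have "sharp N X $$ (i,l) = - (Zmat N * transpose_mat X * Zmat N) $$ (i,l)"
    unfolding sharp_def using i l by simp
  ultimately show ?thesis using i l ZX_index[of "l+N"] ZX_index[of "l-N"] by auto
qed

lemma quaternionic_if_ctrans_eq_sharp:
  assumes X: "X \<in> carrier_mat (2*N) (2*N)" and h: "ctrans_mat X = sharp N X"
  shows "quaternionic_mat N X"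
  unfolding quaternionic_mat_def
proof (intro conjI allI impI X)
  fix i l assume i: "i < N" and l: "l < N"
  have "ctrans_mat X $$ (l,i) = sharp N X $$ (l,i)" using h by simp
  then show "X $$ (i + N, l + N) = cnj (X $$ (i, l))" using X i l by (simp add: index_sharp)
  have "ctrans_mat X $$ (l,i+N) = sharp N X $$ (l,i+N)" using h by simp
  then have "cnj (X $$ (i+N, l)) = - X $$ (i, l+N)" using X i l by (simp add: index_sharp)
  then show "X $$ (i + N, l) = - cnj (X $$ (i, l + N))" by (metis complex_cnj_cnj complex_cnj_minus)
qed

section \<open>Common eigenvectors of commuting matrices\<close>

definition is_subspace :: "nat \<Rightarrow> complex vec set \<Rightarrow> bool" where
  "is_subspace n S \<longleftrightarrow> (\<forall>v\<in>S. v \<in> carrier_vec n) \<and> (\<forall>v\<in>S. \<forall>w\<in>S. v + w \<in> S) \<and>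
     (\<forall>a. \<forall>v\<in>S. a \<cdot>\<^sub>v v \<in> S)"

lemma subspace_carrier: "is_subspace n S \<Longrightarrow> v \<in> S \<Longrightarrow> v \<in> carrier_vec n"
  and subspace_add: "is_subspace n S \<Longrightarrow> v \<in> S \<Longrightarrow> w \<in> S \<Longrightarrow> v + w \<in> S"
  and subspace_smult: "is_subspace n S \<Longrightarrow> v \<in> S \<Longrightarrow> a \<cdot>\<^sub>v v \<in> S"
  by (auto simp: is_subspace_def)

lemma subspace_diff:
  assumes S: "is_subspace n S" and v: "v \<in> S" and w: "w \<in> S" shows "v - w \<in> S"
proof -
  have "v + (-1) \<cdot>\<^sub>v w = v - w"
    using subspace_carrier[OF S v] subspace_carrier[OF S w] by (intro eq_vecI) auto
  then show ?thesis using subspace_add[OF S v subspace_smult[OF S w, of "-1"]] by simp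
qed

lemma subspace_vimage:
  assumes S: "is_subspace n S" and P: "P \<in> carrier_mat n n"
  shows "is_subspace n {x \<in> carrier_vec n. P *\<^sub>v x \<in> S}"
  unfolding is_subspace_def
  using subspace_add[OF S] subspace_smult[OF S]
  by (auto simp: mult_add_distrib_mat_vec[OF P] mult_mat_vec[OF P])

lemma subspace_eigenspace:
  assumes S: "is_subspace n S" and Y: "Y \<in> carrier_mat n n"
  shows "is_subspace n {v \<in> S. Y *\<^sub>v v = \<mu> \<cdot>\<^sub>v v}"
  unfolding is_subspace_def
proof (intro conjI ballI allI; clarify)
  fix v w assume "v \<in> S" "w \<in> S" "Y *\<^sub>v v = \<mu> \<cdot>\<^sub>v v" "Y *\<^sub>v w = \<mu> \<cdot>\<^sub>v w"
  then show "v + w \<in> S \<and> Y *\<^sub>v (v + w) = \<mu> \<cdot>\<^sub>v (v + w)"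
    using subspace_carrier[OF S] subspace_add[OF S]
    by (simp add: mult_add_distrib_mat_vec[OF Y] smult_add_distrib_vec[of v n w])
qed (use subspace_carrier[OF S] subspace_smult[OF S] in
      \<open>auto simp: mult_mat_vec[OF Y] smult_smult_assoc mult.commute\<close>)

lemma upper_triangular_shift_support:
  fixes B :: "complex mat"
  assumes B: "B \<in> carrier_mat n n" "upper_triangular B" and x: "x \<in> carrier_vec n"
    and z: "\<And>i. Suc m \<le> i \<Longrightarrow> i < n \<Longrightarrow> x $ i = 0" and i: "m \<le> i" "i < n"
  shows "(B *\<^sub>v x - B$$(m,m) \<cdot>\<^sub>v x) $ i = 0"
proof -
  have "(\<Sum>l<n. B $$ (i,l) * x $ l) = (\<Sum>l<n. if l = m then (if i = m then B$$(m,m) * x$m else 0) else 0)"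
    using B z i unfolding upper_triangular_def by (intro sum.cong refl) (rename_tac l, case_tac "l < i"; auto)
  also have "\<dots> = (if i = m then B$$(m,m) * x$m else 0)" using i by simp
  finally have "(\<Sum>l<n. B $$ (i,l) * x $ l) = (if i = m then B$$(m,m) * x$m else 0)" .
  then show ?thesis using B x i z[of i] by (auto simp: row_scalar_prod_sum)
qed

text \<open>Descent on the support of \<open>x\<close>: if \<open>x\<close> lives on the first \<open>m+1\<close> coordinates, then
  \<open>(B - B\<^sub>m\<^sub>m) x\<close> lives on the first \<open>m\<close>, so either \<open>x\<close> is an eigenvector or we descend.\<close>

lemma upper_triangular_invariant_eigenvector:
  fixes B :: "complex mat"
  assumes B: "B \<in> carrier_mat n n" "upper_triangular B" and S: "is_subspace n S"
    and inv: "\<forall>v\<in>S. B *\<^sub>v v \<in> S" and x: "x \<in> S" "x \<noteq> 0\<^sub>v n"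
  shows "\<exists>v\<in>S. v \<noteq> 0\<^sub>v n \<and> (\<exists>\<mu>. B *\<^sub>v v = \<mu> \<cdot>\<^sub>v v)"
proof -
  have "x \<in> S \<Longrightarrow> x \<noteq> 0\<^sub>v n \<Longrightarrow> \<forall>i. m \<le> i \<longrightarrow> i < n \<longrightarrow> x $ i = 0 \<Longrightarrow> ?thesis" for m x
  proof (induction m arbitrary: x)
    case 0
    then show ?case using subspace_carrier[OF S] by (auto intro!: eq_vecI)
  next
    case (Suc m)
    have xc: "x \<in> carrier_vec n" using subspace_carrier[OF S Suc.prems(1)] .
    define x' where "x' = B *\<^sub>v x - B$$(m,m) \<cdot>\<^sub>v x"
    have x'S: "x' \<in> S"
      unfolding x'_def using inv Suc.prems(1) by (intro subspace_diff[OF S] subspace_smult[OF S]) auto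
    show ?case
    proof (cases "x' = 0\<^sub>v n")
      case True
      have "B *\<^sub>v x = B$$(m,m) \<cdot>\<^sub>v x"
      proof (rule eq_vecI)
        fix i assume "i < dim_vec (B$$(m,m) \<cdot>\<^sub>v x)"
        then have "i < n" using xc by auto
        then show "(B *\<^sub>v x) $ i = (B$$(m,m) \<cdot>\<^sub>v x) $ i"
          using True B xc unfolding x'_def by (metis carrier_vecD dim_mult_mat_vec index_minus_vec(1)
              index_smult_vec(2) index_zero_vec(1) right_minus_eq carrier_matD(1))
      qed (use B xc in auto)
      then show ?thesis using Suc.prems by blast
    next
      case False
      have "\<forall>i. m \<le> i \<longrightarrow> i < n \<longrightarrow> x' $ i = 0"
      proof (cases "m < n")
        case True
        then show ?thesis
          using upper_triangular_shift_support[OF B xc] Suc.prems(3) unfolding x'_def by auto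
      next
        case False
        then show ?thesis by auto
      qed
      then show ?thesis using Suc.IH x'S False by blast
    qed
  qed
  from this[of x n] show ?thesis using x by auto
qed

lemma invariant_subspace_eigenvector:
  fixes Y :: "complex mat"
  assumes Y: "Y \<in> carrier_mat n n" and S: "is_subspace n S" and inv: "\<forall>v\<in>S. Y *\<^sub>v v \<in> S"
    and w: "w \<in> S" "w \<noteq> 0\<^sub>v n"
  shows "\<exists>v\<in>S. v \<noteq> 0\<^sub>v n \<and> (\<exists>\<mu>. Y *\<^sub>v v = \<mu> \<cdot>\<^sub>v v)"
proof -
  obtain es where "char_poly Y = (\<Prod>a\<leftarrow>es. [:- a, 1:])" using char_poly_factorized[OF Y] by auto
  then obtain B where B: "B \<in> carrier_mat n n" "upper_triangular B" "similar_mat Y B"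
    using schur_upper_triangular[OF Y] by blast
  then obtain P Q where P: "P \<in> carrier_mat n n" and Q: "Q \<in> carrier_mat n n"
    and PQ: "P * Q = 1\<^sub>m n" and QP: "Q * P = 1\<^sub>m n" and YPBQ: "Y = P * B * Q"
    using Y unfolding similar_mat_def similar_mat_wit_def Let_def by auto
  define S' where "S' = {x \<in> carrier_vec n. P *\<^sub>v x \<in> S}"
  have QP_vec: "Q *\<^sub>v (P *\<^sub>v x) = x" if "x \<in> carrier_vec n" for x
    using assoc_mult_mat_vec[OF Q P that, symmetric] QP that by simp
  have intertwine: "P *\<^sub>v (B *\<^sub>v x) = Y *\<^sub>v (P *\<^sub>v x)" if x: "x \<in> carrier_vec n" for x
  proof -
    have Px: "P *\<^sub>v x \<in> carrier_vec n" using P x by simp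
    have "Y *\<^sub>v (P *\<^sub>v x) = (P * B) *\<^sub>v (Q *\<^sub>v (P *\<^sub>v x))"
      unfolding YPBQ by (rule assoc_mult_mat_vec[OF _ Q Px]) (use P B in auto)
    also have "\<dots> = P *\<^sub>v (B *\<^sub>v x)"
      using assoc_mult_mat_vec[OF P B(1) x] by (simp add: QP_vec[OF x])
    finally show ?thesis by simp
  qed
  have S': "is_subspace n S'" unfolding S'_def by (rule subspace_vimage[OF S P])
  have inv': "\<forall>x\<in>S'. B *\<^sub>v x \<in> S'"
    using inv intertwine B(1) unfolding S'_def by auto
  have wc: "w \<in> carrier_vec n" using subspace_carrier[OF S w(1)] .
  have PQw: "P *\<^sub>v (Q *\<^sub>v w) = w" using assoc_mult_mat_vec[OF P Q wc, symmetric] PQ wc by simp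
  have mult_zero_vec: "A *\<^sub>v 0\<^sub>v n = 0\<^sub>v n" if "A \<in> carrier_mat n n" for A :: "complex mat"
    using that by (intro eq_vecI) auto
  have "Q *\<^sub>v w \<in> S'" "Q *\<^sub>v w \<noteq> 0\<^sub>v n"
    using PQw w Q wc mult_zero_vec[OF P] unfolding S'_def by auto
  then obtain x \<mu> where x: "x \<in> S'" "x \<noteq> 0\<^sub>v n" and ev: "B *\<^sub>v x = \<mu> \<cdot>\<^sub>v x"
    using upper_triangular_invariant_eigenvector[OF B(1,2) S' inv'] by blast
  have xc: "x \<in> carrier_vec n" using x unfolding S'_def by auto
  have "Y *\<^sub>v (P *\<^sub>v x) = \<mu> \<cdot>\<^sub>v (P *\<^sub>v x)" using intertwine[OF xc] ev mult_mat_vec[OF P xc] by simp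
  moreover have "P *\<^sub>v x \<noteq> 0\<^sub>v n" using QP_vec[OF xc] x(2) mult_zero_vec[OF Q] by auto
  ultimately show ?thesis using x unfolding S'_def by blast
qed

lemma commuting_common_eigenvector:
  fixes Y :: "nat \<Rightarrow> complex mat"
  assumes "is_subspace n S" "\<exists>w\<in>S. w \<noteq> 0\<^sub>v n" "\<forall>j<k. Y j \<in> carrier_mat n n"
    "\<forall>j<k. \<forall>v\<in>S. Y j *\<^sub>v v \<in> S"
    "\<forall>i<k. \<forall>j<k. \<forall>v\<in>S. Y i *\<^sub>v (Y j *\<^sub>v v) = Y j *\<^sub>v (Y i *\<^sub>v v)"
  shows "\<exists>v\<in>S. v \<noteq> 0\<^sub>v n \<and> (\<forall>j<k. \<exists>\<mu>. Y j *\<^sub>v v = \<mu> \<cdot>\<^sub>v v)"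
  using assms
proof (induction k arbitrary: S)
  case 0
  then show ?case by auto
next
  case (Suc k)
  note S = Suc.prems(1) and Yc = Suc.prems(3) and inv = Suc.prems(4) and com = Suc.prems(5)
  have Yk: "Y k \<in> carrier_mat n n" using Yc by auto
  obtain v0 \<mu> where v0: "v0 \<in> S" "v0 \<noteq> 0\<^sub>v n" "Y k *\<^sub>v v0 = \<mu> \<cdot>\<^sub>v v0"
    using invariant_subspace_eigenvector[OF Yk S] inv Suc.prems(2) by blast
  define E where "E = {v \<in> S. Y k *\<^sub>v v = \<mu> \<cdot>\<^sub>v v}"
  have inv': "\<forall>j<k. \<forall>v\<in>E. Y j *\<^sub>v v \<in> E"
  proof (intro allI impI ballI)
    fix j v assume j: "j < k" and v: "v \<in> E"
    then have vc: "v \<in> carrier_vec n" and vS: "v \<in> S"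
      using subspace_carrier[OF S] unfolding E_def by auto
    have "Y k *\<^sub>v (Y j *\<^sub>v v) = Y j *\<^sub>v (Y k *\<^sub>v v)" using com j vS by auto
    also have "\<dots> = \<mu> \<cdot>\<^sub>v (Y j *\<^sub>v v)"
      using v Yc j vc unfolding E_def by (auto simp: mult_mat_vec[of "Y j" n n])
    finally show "Y j *\<^sub>v v \<in> E" using inv j vS unfolding E_def by auto
  qed
  have "\<exists>v\<in>E. v \<noteq> 0\<^sub>v n \<and> (\<forall>j<k. \<exists>\<mu>. Y j *\<^sub>v v = \<mu> \<cdot>\<^sub>v v)"
  proof (rule Suc.IH)
    show "is_subspace n E" unfolding E_def by (rule subspace_eigenspace[OF S Yk])
  qed (use inv' Yc com v0 in \<open>auto simp: E_def\<close>)
  then show ?case unfolding E_def using less_Suc_eq by auto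
qed

section \<open>\<open>J\<close>-orthonormal systems and their complements\<close>

definition J_orthonormal :: "nat \<Rightarrow> (nat \<Rightarrow> complex vec) \<Rightarrow> nat \<Rightarrow> bool" where
  "J_orthonormal N u m \<longleftrightarrow> (\<forall>c<m. u c \<in> carrier_vec (2*N)) \<and>
     (\<forall>c<m. \<forall>d<m. cinner (2*N) (u c) (u d) = (if c = d then 1 else 0) \<and>
        cinner (2*N) (J_vec N (u c)) (u d) = 0)"

definition J_proj :: "nat \<Rightarrow> (nat \<Rightarrow> complex vec) \<Rightarrow> nat \<Rightarrow> complex vec \<Rightarrow> complex vec" where
  "J_proj N u m v = vec (2*N) (\<lambda>i. \<Sum>c<m. cinner (2*N) (u c) v * u c $ i +
     cinner (2*N) (J_vec N (u c)) v * J_vec N (u c) $ i)"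

definition J_perp :: "nat \<Rightarrow> (nat \<Rightarrow> complex vec) \<Rightarrow> nat \<Rightarrow> complex vec set" where
  "J_perp N u m = {v \<in> carrier_vec (2*N). \<forall>c<m. cinner (2*N) (u c) v = 0 \<and> cinner (2*N) (J_vec N (u c)) v = 0}"

lemma J_orthonormal_carrier: "J_orthonormal N u m \<Longrightarrow> c < m \<Longrightarrow> u c \<in> carrier_vec (2*N)"
  by (simp add: J_orthonormal_def)

lemma J_orthonormalD:
  assumes "J_orthonormal N u m" "c < m" "d < m"
  shows "cinner (2*N) (u c) (u d) = (if c = d then 1 else 0)"
    "cinner (2*N) (J_vec N (u c)) (u d) = 0"
    "cinner (2*N) (u d) (J_vec N (u c)) = 0"
    "cinner (2*N) (J_vec N (u c)) (J_vec N (u d)) = (if c = d then 1 else 0)"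
proof -
  show u: "cinner (2*N) (u c) (u d) = (if c = d then 1 else 0)"
    and Ju: "cinner (2*N) (J_vec N (u c)) (u d) = 0"
    using assms unfolding J_orthonormal_def by auto
  show "cinner (2*N) (u d) (J_vec N (u c)) = 0" using Ju cinner_commute[of "2*N" "u d"] by simp
  have "cinner (2*N) (u d) (u c) = (if c = d then 1 else 0)" using assms unfolding J_orthonormal_def by auto
  then show "cinner (2*N) (J_vec N (u c)) (J_vec N (u d)) = (if c = d then 1 else 0)"
    by (simp add: cinner_J_J)
qed

lemma J_proj_carrier[simp]: "J_proj N u m v \<in> carrier_vec (2*N)"
  and dim_J_proj[simp]: "dim_vec (J_proj N u m v) = 2*N"
  by (simp_all add: J_proj_def)

lemma J_proj_cong: "(\<And>c. c < m \<Longrightarrow> u c = u' c) \<Longrightarrow> J_proj N u m v = J_proj N u' m v"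
  unfolding J_proj_def by (intro eq_vecI) auto

lemma cinner_J_proj_right:
  "cinner (2*N) s (J_proj N u m v) = (\<Sum>c<m. cinner (2*N) (u c) v * cinner (2*N) s (u c) +
     cinner (2*N) (J_vec N (u c)) v * cinner (2*N) s (J_vec N (u c)))"
proof -
  let ?a = "\<lambda>c. cinner (2*N) (u c) v" and ?b = "\<lambda>c. cinner (2*N) (J_vec N (u c)) v"
  have "cinner (2*N) s (J_proj N u m v) =
      (\<Sum>i<2*N. \<Sum>c<m. ?a c * (cnj (s$i) * u c $ i) + ?b c * (cnj (s$i) * J_vec N (u c) $ i))"
    unfolding cinner_def J_proj_def by (simp add: sum_distrib_left algebra_simps)
  also have "\<dots> = (\<Sum>c<m. \<Sum>i<2*N. ?a c * (cnj (s$i) * u c $ i) + ?b c * (cnj (s$i) * J_vec N (u c) $ i))"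
    by (rule sum.swap)
  finally show ?thesis unfolding cinner_def by (simp add: sum.distrib sum_distrib_left)
qed

lemma J_perp_cinner_J_proj:
  assumes s: "s \<in> J_perp N u m" and m': "m' \<le> m"
  shows "cinner (2*N) s (J_proj N u m' v) = 0" "cinner (2*N) (J_proj N u m' v) s = 0"
proof -
  have "\<And>c. c < m' \<Longrightarrow> cinner (2*N) s (u c) = 0 \<and> cinner (2*N) s (J_vec N (u c)) = 0"
    using s m' cinner_commute[of "2*N" s] unfolding J_perp_def by force
  then show "cinner (2*N) s (J_proj N u m' v) = 0" unfolding cinner_J_proj_right by simp
  then show "cinner (2*N) (J_proj N u m' v) s = 0" by (subst cinner_commute) simp
qed

lemma J_vec_J_perp: assumes s: "s \<in> J_perp N u m" shows "J_vec N s \<in> J_perp N u m"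
proof -
  have "\<And>c. c < m \<Longrightarrow> cinner (2*N) (u c) s = 0 \<and> cinner (2*N) (J_vec N (u c)) s = 0"
    using s unfolding J_perp_def by auto
  then show ?thesis unfolding J_perp_def
    using cinner_J_right[of N "u _" s] cinner_J_J[of N "u _" s] cinner_commute[of "2*N" s] by auto
qed

lemma subspace_J_perp: "is_subspace (2*N) (J_perp N u m)"
  unfolding is_subspace_def J_perp_def by (auto simp: cinner_add_right cinner_smult_right)

lemma diff_J_proj_in_J_perp:
  assumes o: "J_orthonormal N u m" and v: "v \<in> carrier_vec (2*N)"
  shows "v - J_proj N u m v \<in> J_perp N u m"
  unfolding J_perp_def
proof (intro CollectI conjI allI impI)
  show "v - J_proj N u m v \<in> carrier_vec (2*N)" using v by simp
next
  fix d assume d: "d < m"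
  have "cinner (2*N) (u d) (J_proj N u m v) = (\<Sum>c<m. if c = d then cinner (2*N) (u c) v else 0)"
    unfolding cinner_J_proj_right using d J_orthonormalD[OF o _ d] J_orthonormalD[OF o d]
    by (intro sum.cong) auto
  then show "cinner (2*N) (u d) (v - J_proj N u m v) = 0" using v d by (simp add: cinner_diff_right)
next
  fix d assume d: "d < m"
  have "cinner (2*N) (J_vec N (u d)) (J_proj N u m v) =
      (\<Sum>c<m. if c = d then cinner (2*N) (J_vec N (u c)) v else 0)"
    unfolding cinner_J_proj_right using d J_orthonormalD[OF o _ d] J_orthonormalD[OF o d]
    by (intro sum.cong) auto
  then show "cinner (2*N) (J_vec N (u d)) (v - J_proj N u m v) = 0" using v d by (simp add: cinner_diff_right)
qed

definition J_perp_proj_mat :: "nat \<Rightarrow> (nat \<Rightarrow> complex vec) \<Rightarrow> nat \<Rightarrow> complex mat" where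
  "J_perp_proj_mat N u m = mat (2*N) (2*N) (\<lambda>(i,l). (if i = l then 1 else 0) -
     (\<Sum>c<m. u c $ i * cnj (u c $ l) + J_vec N (u c) $ i * cnj (J_vec N (u c) $ l)))"

lemma J_perp_proj_mat_carrier[simp]: "J_perp_proj_mat N u m \<in> carrier_mat (2*N) (2*N)"
  and dim_J_perp_proj_mat[simp]:
    "dim_row (J_perp_proj_mat N u m) = 2*N" "dim_col (J_perp_proj_mat N u m) = 2*N"
  by (simp_all add: J_perp_proj_mat_def)

lemma J_perp_proj_mat_mult_vec:
  assumes v: "v \<in> carrier_vec (2*N)"
  shows "J_perp_proj_mat N u m *\<^sub>v v = v - J_proj N u m v"
proof (rule eq_vecI)
  fix i assume "i < dim_vec (v - J_proj N u m v)"
  then have i: "i < 2*N" using v by simp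
  let ?t = "\<lambda>c l. u c $ i * (cnj (u c $ l) * v $ l) + J_vec N (u c) $ i * (cnj (J_vec N (u c) $ l) * v $ l)"
  have "(J_perp_proj_mat N u m *\<^sub>v v) $ i = (\<Sum>l<2*N. (if i = l then v $ l else 0) - (\<Sum>c<m. ?t c l))"
    by (subst index_mult_mat_vec_sum[OF J_perp_proj_mat_carrier v i])
       (auto simp: J_perp_proj_mat_def i left_diff_distrib sum_distrib_right ring_distribs mult.assoc
         intro!: sum.cong)
  also have "\<dots> = v $ i - (\<Sum>c<m. \<Sum>l<2*N. ?t c l)"
    using i by (simp add: sum_subtractf sum.swap[of _ "{..<2*N}"])
  also have "(\<Sum>c<m. \<Sum>l<2*N. ?t c l) = J_proj N u m v $ i"
    unfolding J_proj_def cinner_def using i by (simp add: sum.distrib sum_distrib_left algebra_simps)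
  finally show "(J_perp_proj_mat N u m *\<^sub>v v) $ i = (v - J_proj N u m v) $ i" using i v by simp
qed (use v in simp)

lemma trace_J_perp_proj_mat:
  assumes o: "J_orthonormal N u m"
  shows "(\<Sum>i<2*N. J_perp_proj_mat N u m $$ (i,i)) = of_nat (2*N) - of_nat (2*m)"
proof -
  let ?t = "\<lambda>c i. u c $ i * cnj (u c $ i) + J_vec N (u c) $ i * cnj (J_vec N (u c) $ i)"
  have "(\<Sum>i<2*N. J_perp_proj_mat N u m $$ (i,i)) = (\<Sum>i<2*N. 1 - (\<Sum>c<m. ?t c i))"
    by (auto simp: J_perp_proj_mat_def intro!: sum.cong)
  also have "\<dots> = of_nat (2*N) - (\<Sum>c<m. \<Sum>i<2*N. ?t c i)"
    by (simp add: sum_subtractf sum.swap[of _ "{..<2*N}"])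
  also have "(\<Sum>c<m. \<Sum>i<2*N. ?t c i) = (\<Sum>c<m. cinner (2*N) (u c) (u c) +
      cinner (2*N) (J_vec N (u c)) (J_vec N (u c)))"
    unfolding cinner_def by (simp add: sum.distrib mult.commute)
  also have "\<dots> = (\<Sum>c<m. 2)" using J_orthonormalD[OF o] by (intro sum.cong) auto
  finally show ?thesis by simp
qed

lemma J_perp_nonzero:
  assumes o: "J_orthonormal N u m" and m: "m < N"
  shows "\<exists>w\<in>J_perp N u m. w \<noteq> 0\<^sub>v (2*N)"
proof (rule ccontr)
  assume "\<not> ?thesis"
  then have z: "\<And>w. w \<in> J_perp N u m \<Longrightarrow> w = 0\<^sub>v (2*N)" by auto
  let ?P = "J_perp_proj_mat N u m"
  have "?P $$ (i,i) = 0" if i: "i < 2*N" for i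
  proof -
    let ?e = "unit_vec (2*N) i :: complex vec"
    have "?P *\<^sub>v ?e = 0\<^sub>v (2*N)"
      using z diff_J_proj_in_J_perp[OF o] J_perp_proj_mat_mult_vec by simp
    moreover have "(?P *\<^sub>v ?e) $ i = ?P $$ (i,i)" using i by simp
    ultimately show ?thesis using i by simp
  qed
  then have "(of_nat (2*N) :: complex) = of_nat (2*m)" using trace_J_perp_proj_mat[OF o] by simp
  then show False using m of_nat_eq_iff by fastforce
qed

lemma subspace_unit_vector:
  assumes S: "is_subspace n S" and v: "v \<in> S" "v \<noteq> 0\<^sub>v n"
  shows "\<exists>c. c \<cdot>\<^sub>v v \<in> S \<and> cinner n (c \<cdot>\<^sub>v v) (c \<cdot>\<^sub>v v) = 1"
proof -
  have vc: "v \<in> carrier_vec n" using subspace_carrier[OF S v(1)] .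
  obtain r where r: "r > 0" "cinner n v v = of_real r" using cinner_self_pos[OF vc v(2)] by auto
  define c where "c = complex_of_real (1 / sqrt r)"
  have "cinner n (c \<cdot>\<^sub>v v) (c \<cdot>\<^sub>v v) = cnj c * c * cinner n v v"
    using vc by (simp add: cinner_smult_left cinner_smult_right)
  also have "\<dots> = 1" using r unfolding c_def by (simp add: field_simps flip: of_real_mult)
  finally show ?thesis using subspace_smult[OF S v(1)] by blast
qed

lemma J_orthonormal_extend:
  assumes o: "J_orthonormal N u m" and v: "v \<in> J_perp N u m" and n: "cinner (2*N) v v = 1"
  shows "J_orthonormal N (u(m := v)) (Suc m)"
proof -
  have vc: "v \<in> carrier_vec (2*N)"
    and vo: "\<And>c. c < m \<Longrightarrow> cinner (2*N) (u c) v = 0 \<and> cinner (2*N) (J_vec N (u c)) v = 0"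
    using v unfolding J_perp_def by auto
  have vo': "\<And>c. c < m \<Longrightarrow> cinner (2*N) v (u c) = 0 \<and> cinner (2*N) (J_vec N v) (u c) = 0"
    using vo cinner_commute[of "2*N" v] cinner_J_left[of N v] by (metis complex_cnj_zero neg_equal_0_iff_equal)
  show ?thesis
    unfolding J_orthonormal_def
    using J_orthonormal_carrier[OF o] J_orthonormalD[OF o] vc n vo vo' cinner_J_self[of N v]
    by (auto simp: less_Suc_eq)
qed

definition quaternionic_commuting :: "nat \<Rightarrow> (nat \<Rightarrow> complex mat) \<Rightarrow> nat \<Rightarrow> bool" where
  "quaternionic_commuting N X k \<longleftrightarrow>
     (\<forall>j<k. quaternionic_mat N (X j)) \<and> (\<forall>i<k. \<forall>j<k. X i * X j = X j * X i)"

text \<open>\<open>X\<^sub>j u\<^sub>b \<in> span {u\<^sub>c, J u\<^sub>c | c < b} + \<complex> u\<^sub>b\<close>: in the basis \<open>u, J u\<close> this is the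
  block-triangular shape of the theorem.\<close>

definition J_flag :: "nat \<Rightarrow> (nat \<Rightarrow> complex mat) \<Rightarrow> nat \<Rightarrow> nat \<Rightarrow> (nat \<Rightarrow> complex vec) \<Rightarrow> bool" where
  "J_flag N X k m u \<longleftrightarrow> J_orthonormal N u m \<and>
     (\<forall>j<k. \<forall>b<m. \<exists>\<alpha>. X j *\<^sub>v u b = J_proj N u b (X j *\<^sub>v u b) + \<alpha> \<cdot>\<^sub>v u b)"

lemma J_flag_J_orthonormal: "J_flag N X k m u \<Longrightarrow> J_orthonormal N u m"
  by (simp add: J_flag_def)

lemma J_perp_adjoint_invariant:
  assumes f: "J_flag N X k m u" and j: "j < k" and q: "quaternionic_mat N (X j)"
    and s: "s \<in> J_perp N u m"
  shows "ctrans_mat (X j) *\<^sub>v s \<in> J_perp N u m"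
  unfolding J_perp_def
proof (intro CollectI conjI allI impI)
  have X: "X j \<in> carrier_mat (2*N) (2*N)" using quaternionic_mat_carrier[OF q] .
  have sc: "s \<in> carrier_vec (2*N)" using s unfolding J_perp_def by auto
  show "ctrans_mat (X j) *\<^sub>v s \<in> carrier_vec (2*N)" using ctrans_mat_carrier[OF X] sc by simp
  fix c assume c: "c < m"
  have uc: "u c \<in> carrier_vec (2*N)" using J_orthonormal_carrier[OF J_flag_J_orthonormal[OF f] c] .
  obtain \<alpha> where ev: "X j *\<^sub>v u c = J_proj N u c (X j *\<^sub>v u c) + \<alpha> \<cdot>\<^sub>v u c"
    using f j c unfolding J_flag_def by auto
  let ?p = "J_proj N u c (X j *\<^sub>v u c)"
  have s0: "cinner (2*N) (u c) s = 0" "cinner (2*N) (J_vec N (u c)) s = 0"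
    using s c unfolding J_perp_def by auto
  have "cinner (2*N) (u c) (ctrans_mat (X j) *\<^sub>v s) = cinner (2*N) (X j *\<^sub>v u c) s"
    using cinner_adjoint_left[OF X uc sc] by simp
  also have "\<dots> = cinner (2*N) ?p s + cnj \<alpha> * cinner (2*N) (u c) s"
    by (subst ev) (simp add: uc cinner_add_left cinner_smult_left)
  also have "\<dots> = 0" using J_perp_cinner_J_proj(2)[OF s, of c] c s0 by simp
  finally show "cinner (2*N) (u c) (ctrans_mat (X j) *\<^sub>v s) = 0" .
  have Js: "J_vec N s \<in> J_perp N u m" using J_vec_J_perp[OF s] .
  have "cinner (2*N) (J_vec N (u c)) (ctrans_mat (X j) *\<^sub>v s) = cinner (2*N) (J_vec N (X j *\<^sub>v u c)) s"
    using cinner_adjoint_left[OF X _ sc, of "J_vec N (u c)"] quaternionic_mult_J_vec[OF q uc] by simp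
  also have "\<dots> = - cinner (2*N) (J_vec N s) (X j *\<^sub>v u c)"
    using cinner_J_right[of N s "X j *\<^sub>v u c"] cinner_commute[of "2*N" "J_vec N (X j *\<^sub>v u c)" s] by simp
  also have "cinner (2*N) (J_vec N s) (X j *\<^sub>v u c) =
      cinner (2*N) (J_vec N s) ?p + \<alpha> * cinner (2*N) (J_vec N s) (u c)"
    by (subst ev) (simp add: uc cinner_add_right cinner_smult_right)
  also have "cinner (2*N) (J_vec N s) (u c) = 0"
    using Js c cinner_commute[of "2*N" "J_vec N s" "u c"] unfolding J_perp_def by auto
  also have "cinner (2*N) (J_vec N s) ?p = 0" using J_perp_cinner_J_proj(1)[OF Js, of c] c by simp
  finally show "cinner (2*N) (J_vec N (u c)) (ctrans_mat (X j) *\<^sub>v s) = 0" by simp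
qed

text \<open>The complement is \<open>X\<^sup>*\<close>-invariant, so the span of the flag is \<open>X\<close>-invariant, which
  is \<open>P X (1 - P) = 0\<close> for the projection \<open>P\<close> onto the complement.\<close>

lemma J_perp_proj_compress:
  assumes f: "J_flag N X k m u" and i: "i < k" and q: "quaternionic_mat N (X i)"
    and w: "w \<in> carrier_vec (2*N)"
  defines "P \<equiv> J_perp_proj_mat N u m"
  shows "P *\<^sub>v (X i *\<^sub>v (P *\<^sub>v w)) = P *\<^sub>v (X i *\<^sub>v w)"
proof -
  have X: "X i \<in> carrier_mat (2*N) (2*N)" using quaternionic_mat_carrier[OF q] .
  have o: "J_orthonormal N u m" using J_flag_J_orthonormal[OF f] .
  define p where "p = J_proj N u m w"
  have Xp: "X i *\<^sub>v p \<in> carrier_vec (2*N)" using X unfolding p_def by simp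
  define z where "z = P *\<^sub>v (X i *\<^sub>v p)"
  have zeq: "z = X i *\<^sub>v p - J_proj N u m (X i *\<^sub>v p)"
    unfolding z_def P_def using J_perp_proj_mat_mult_vec[OF Xp] .
  have zS: "z \<in> J_perp N u m" unfolding zeq by (rule diff_J_proj_in_J_perp[OF o Xp])
  have zc: "z \<in> carrier_vec (2*N)" using zS unfolding J_perp_def by auto
  have "cinner (2*N) z z = cinner (2*N) z (X i *\<^sub>v p) - cinner (2*N) z (J_proj N u m (X i *\<^sub>v p))"
    by (subst (2) zeq) (simp add: cinner_diff_right Xp)
  also have "cinner (2*N) z (J_proj N u m (X i *\<^sub>v p)) = 0"
    using J_perp_cinner_J_proj(1)[OF zS order.refl] .
  also have "cinner (2*N) z (X i *\<^sub>v p) = cinner (2*N) (ctrans_mat (X i) *\<^sub>v z) p"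
    using cinner_adjoint_right[OF X _ zc] unfolding p_def by simp
  also have "\<dots> = 0"
    using J_perp_cinner_J_proj(1)[OF J_perp_adjoint_invariant[OF f i q zS] order.refl] unfolding p_def .
  finally have z0: "z = 0\<^sub>v (2*N)" using cinner_self_eq_0[OF zc] by simp
  have Xw: "X i *\<^sub>v w \<in> carrier_vec (2*N)" using X w by simp
  have "P *\<^sub>v (X i *\<^sub>v (P *\<^sub>v w)) = P *\<^sub>v (X i *\<^sub>v w - X i *\<^sub>v p)"
    unfolding P_def p_def J_perp_proj_mat_mult_vec[OF w] using mult_minus_distrib_mat_vec[OF X w] by simp
  also have "\<dots> = P *\<^sub>v (X i *\<^sub>v w) - z"
    unfolding z_def P_def by (rule mult_minus_distrib_mat_vec[OF J_perp_proj_mat_carrier Xw Xp])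
  finally show ?thesis unfolding z0 P_def using mult_mat_vec_carrier[OF J_perp_proj_mat_carrier Xw] by simp
qed

lemma J_perp_compressions_common_eigenvector:
  assumes h: "quaternionic_commuting N X k" and f: "J_flag N X k m u" and m: "m < N"
  defines "Y \<equiv> \<lambda>j. J_perp_proj_mat N u m * X j"
  shows "\<exists>v\<in>J_perp N u m. v \<noteq> 0\<^sub>v (2*N) \<and> (\<forall>j<k. \<exists>\<mu>. Y j *\<^sub>v v = \<mu> \<cdot>\<^sub>v v)"
proof -
  have q: "\<And>j. j < k \<Longrightarrow> quaternionic_mat N (X j)"
    and com: "\<And>i j. i < k \<Longrightarrow> j < k \<Longrightarrow> X i * X j = X j * X i"
    using h unfolding quaternionic_commuting_def by auto
  have Xc: "\<And>j. j < k \<Longrightarrow> X j \<in> carrier_mat (2*N) (2*N)" using q quaternionic_mat_carrier by blast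
  have o: "J_orthonormal N u m" using J_flag_J_orthonormal[OF f] .
  define S where "S = J_perp N u m"
  define P where "P = J_perp_proj_mat N u m"
  have S: "is_subspace (2*N) S" unfolding S_def by (rule subspace_J_perp)
  have Sc: "\<And>v. v \<in> S \<Longrightarrow> v \<in> carrier_vec (2*N)" using subspace_carrier[OF S] .
  have Y_vec: "Y j *\<^sub>v v = P *\<^sub>v (X j *\<^sub>v v)" if "j < k" "v \<in> S" for j v
    unfolding Y_def P_def using assoc_mult_mat_vec[OF J_perp_proj_mat_carrier Xc Sc] that by auto
  have Yc: "\<forall>j<k. Y j \<in> carrier_mat (2*N) (2*N)"
    unfolding Y_def using Xc mult_carrier_mat[OF J_perp_proj_mat_carrier] by blast
  have Yinv: "\<forall>j<k. \<forall>v\<in>S. Y j *\<^sub>v v \<in> S"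
  proof (intro allI impI ballI)
    fix j v assume j: "j < k" and v: "v \<in> S"
    have Xv: "X j *\<^sub>v v \<in> carrier_vec (2*N)" using Xc[OF j] Sc[OF v] by simp
    show "Y j *\<^sub>v v \<in> S"
      unfolding Y_vec[OF j v] P_def J_perp_proj_mat_mult_vec[OF Xv] S_def
      by (rule diff_J_proj_in_J_perp[OF o Xv])
  qed
  have Y_mult: "Y a *\<^sub>v (Y b *\<^sub>v v) = P *\<^sub>v ((X a * X b) *\<^sub>v v)"
    if a: "a < k" and b: "b < k" and v: "v \<in> S" for a b v
  proof -
    have Xbv: "X b *\<^sub>v v \<in> carrier_vec (2*N)" using Xc[OF b] Sc[OF v] by simp
    have "Y a *\<^sub>v (Y b *\<^sub>v v) = P *\<^sub>v (X a *\<^sub>v (P *\<^sub>v (X b *\<^sub>v v)))"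
      using Y_vec[OF b v] Y_vec[OF a Yinv[rule_format, OF b v]] by simp
    also have "\<dots> = P *\<^sub>v (X a *\<^sub>v (X b *\<^sub>v v))"
      unfolding P_def by (rule J_perp_proj_compress[OF f a q[OF a] Xbv])
    finally show ?thesis using Xc[OF a] Xc[OF b] Sc[OF v] by simp
  qed
  have Ycom: "\<forall>i<k. \<forall>j<k. \<forall>v\<in>S. Y i *\<^sub>v (Y j *\<^sub>v v) = Y j *\<^sub>v (Y i *\<^sub>v v)"
    using Y_mult com by (metis (no_types, lifting))
  show ?thesis
    using commuting_common_eigenvector[OF S _ Yc Yinv Ycom] J_perp_nonzero[OF o m] unfolding S_def by blast
qed

lemma J_flag_compressed_eigenvector:
  assumes h: "quaternionic_commuting N X k" and f: "J_flag N X k m u" and m: "m < N"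
  shows "\<exists>v\<in>J_perp N u m. cinner (2*N) v v = 1 \<and>
    (\<forall>j<k. \<exists>\<mu>. J_perp_proj_mat N u m *\<^sub>v (X j *\<^sub>v v) = \<mu> \<cdot>\<^sub>v v)"
proof -
  let ?P = "J_perp_proj_mat N u m"
  have Xc: "\<And>j. j < k \<Longrightarrow> X j \<in> carrier_mat (2*N) (2*N)"
    using h quaternionic_mat_carrier unfolding quaternionic_commuting_def by blast
  obtain v where vS: "v \<in> J_perp N u m" and v0: "v \<noteq> 0\<^sub>v (2*N)"
    and vev: "\<forall>j<k. \<exists>\<mu>. (?P * X j) *\<^sub>v v = \<mu> \<cdot>\<^sub>v v"
    using J_perp_compressions_common_eigenvector[OF h f m] by blast
  obtain c where cv: "c \<cdot>\<^sub>v v \<in> J_perp N u m" "cinner (2*N) (c \<cdot>\<^sub>v v) (c \<cdot>\<^sub>v v) = 1"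
    using subspace_unit_vector[OF subspace_J_perp vS v0] by blast
  have vc: "v \<in> carrier_vec (2*N)" using vS unfolding J_perp_def by auto
  have "\<exists>\<mu>. ?P *\<^sub>v (X j *\<^sub>v (c \<cdot>\<^sub>v v)) = \<mu> \<cdot>\<^sub>v (c \<cdot>\<^sub>v v)" if j: "j < k" for j
  proof -
    obtain \<mu> where "?P *\<^sub>v (X j *\<^sub>v v) = \<mu> \<cdot>\<^sub>v v"
      using vev j assoc_mult_mat_vec[OF J_perp_proj_mat_carrier Xc[OF j] vc] by auto
    then have "?P *\<^sub>v (X j *\<^sub>v (c \<cdot>\<^sub>v v)) = \<mu> \<cdot>\<^sub>v (c \<cdot>\<^sub>v v)"
      using mult_mat_vec[OF Xc[OF j] vc]
        mult_mat_vec[OF J_perp_proj_mat_carrier mult_mat_vec_carrier[OF Xc[OF j] vc]]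
      by (simp add: smult_smult_assoc mult.commute)
    then show ?thesis by blast
  qed
  then show ?thesis using cv by blast
qed

lemma J_flag_extend:
  assumes h: "quaternionic_commuting N X k" and f: "J_flag N X k m u" and m: "m < N"
  shows "\<exists>u'. J_flag N X k (Suc m) u'"
proof -
  have Xc: "\<And>j. j < k \<Longrightarrow> X j \<in> carrier_mat (2*N) (2*N)"
    using h quaternionic_mat_carrier unfolding quaternionic_commuting_def by blast
  have o: "J_orthonormal N u m" using J_flag_J_orthonormal[OF f] .
  obtain v where vS: "v \<in> J_perp N u m" and vn: "cinner (2*N) v v = 1"
    and vev: "\<forall>j<k. \<exists>\<mu>. J_perp_proj_mat N u m *\<^sub>v (X j *\<^sub>v v) = \<mu> \<cdot>\<^sub>v v"
    using J_flag_compressed_eigenvector[OF h f m] by blast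
  have vc: "v \<in> carrier_vec (2*N)" using vS unfolding J_perp_def by auto
  define u' where "u' = u(m := v)"
  have "\<exists>\<alpha>. X j *\<^sub>v u' b = J_proj N u' b (X j *\<^sub>v u' b) + \<alpha> \<cdot>\<^sub>v u' b"
    if j: "j < k" and b: "b < Suc m" for j b
  proof (cases "b = m")
    case False
    then have "b < m" using b by simp
    moreover have "J_proj N u' b (X j *\<^sub>v u' b) = J_proj N u b (X j *\<^sub>v u' b)"
      using \<open>b < m\<close> unfolding u'_def by (intro J_proj_cong) auto
    ultimately show ?thesis using f j unfolding J_flag_def u'_def by auto
  next
    case True
    obtain \<mu> where \<mu>: "J_perp_proj_mat N u m *\<^sub>v (X j *\<^sub>v v) = \<mu> \<cdot>\<^sub>v v" using vev j by auto
    have Xv: "X j *\<^sub>v v \<in> carrier_vec (2*N)" using Xc[OF j] vc by simp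
    have "X j *\<^sub>v v = J_proj N u m (X j *\<^sub>v v) + (X j *\<^sub>v v - J_proj N u m (X j *\<^sub>v v))"
      using Xv carrier_vecD[OF Xv] by (intro eq_vecI) auto
    also have "\<dots> = J_proj N u m (X j *\<^sub>v v) + \<mu> \<cdot>\<^sub>v v"
      using \<mu> unfolding J_perp_proj_mat_mult_vec[OF Xv] by simp
    finally have "X j *\<^sub>v v = J_proj N u m (X j *\<^sub>v v) + \<mu> \<cdot>\<^sub>v v" .
    moreover have "J_proj N u' m (X j *\<^sub>v v) = J_proj N u m (X j *\<^sub>v v)"
      unfolding u'_def by (intro J_proj_cong) auto
    ultimately show ?thesis using True unfolding u'_def by auto
  qed
  then have "J_flag N X k (Suc m) u'"
    unfolding J_flag_def u'_def using J_orthonormal_extend[OF o vS vn] by auto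
  then show ?thesis by blast
qed

lemma J_flag_exists:
  assumes h: "quaternionic_commuting N X k" shows "\<exists>u. J_flag N X k N u"
proof -
  have "m \<le> N \<Longrightarrow> \<exists>u. J_flag N X k m u" for m
  proof (induction m)
    case 0
    then show ?case by (simp add: J_flag_def J_orthonormal_def)
  next
    case (Suc m)
    then show ?case using J_flag_extend[OF h] by (metis Suc_le_lessD less_imp_le_nat)
  qed
  then show ?thesis by simp
qed

section \<open>The symplectic unitary built from a \<open>J\<close>-orthonormal basis\<close>

definition J_basis :: "nat \<Rightarrow> (nat \<Rightarrow> complex vec) \<Rightarrow> nat \<Rightarrow> complex vec" where
  "J_basis N u l = (if l < N then u l else J_vec N (u (l - N)))"

definition J_basis_mat :: "nat \<Rightarrow> (nat \<Rightarrow> complex vec) \<Rightarrow> complex mat" where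
  "J_basis_mat N u = mat (2*N) (2*N) (\<lambda>(i,l). J_basis N u l $ i)"

lemma J_basis_mat_carrier[simp]: "J_basis_mat N u \<in> carrier_mat (2*N) (2*N)"
  and dim_J_basis_mat[simp]: "dim_row (J_basis_mat N u) = 2*N" "dim_col (J_basis_mat N u) = 2*N"
  by (simp_all add: J_basis_mat_def)

lemma index_J_basis_mat[simp]:
  "i < 2*N \<Longrightarrow> l < 2*N \<Longrightarrow> J_basis_mat N u $$ (i,l) = J_basis N u l $ i"
  by (simp add: J_basis_mat_def)

lemma J_basis_carrier: "J_orthonormal N u N \<Longrightarrow> l < 2*N \<Longrightarrow> J_basis N u l \<in> carrier_vec (2*N)"
  unfolding J_basis_def J_orthonormal_def by auto

lemma cinner_J_basis:
  assumes o: "J_orthonormal N u N" and a: "a < 2*N" and b: "b < 2*N"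
  shows "cinner (2*N) (J_basis N u a) (J_basis N u b) = (if a = b then 1 else 0)"
proof (cases "a < N"; cases "b < N")
  assume "a < N" "\<not> b < N"
  then show ?thesis using J_orthonormalD(3)[OF o, of "b-N" a] b unfolding J_basis_def by auto
next
  assume "\<not> a < N" "b < N"
  then show ?thesis using J_orthonormalD(2)[OF o, of "a-N" b] a unfolding J_basis_def by auto
next
  assume "\<not> a < N" "\<not> b < N"
  then have "(a - N = b - N) = (a = b)" by auto
  then show ?thesis using J_orthonormalD(4)[OF o, of "a-N" "b-N"] a b \<open>\<not> a < N\<close> \<open>\<not> b < N\<close>
    unfolding J_basis_def by auto
qed (use J_orthonormalD(1)[OF o] in \<open>simp add: J_basis_def\<close>)

lemma unitary_J_basis_mat:
  assumes o: "J_orthonormal N u N" shows "unitary_mat (2*N) (J_basis_mat N u)"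
proof -
  let ?U = "J_basis_mat N u"
  have "ctrans_mat ?U * ?U = 1\<^sub>m (2*N)"
  proof (rule eq_matI)
    fix a b assume "a < dim_row (1\<^sub>m (2*N) :: complex mat)" "b < dim_col (1\<^sub>m (2*N) :: complex mat)"
    then have a: "a < 2*N" and b: "b < 2*N" by auto
    have "(ctrans_mat ?U * ?U) $$ (a,b) = cinner (2*N) (J_basis N u a) (J_basis N u b)"
      unfolding index_mult_mat_sum[OF ctrans_mat_carrier[OF J_basis_mat_carrier] J_basis_mat_carrier a b]
        cinner_def using a b by (intro sum.cong) auto
    then show "(ctrans_mat ?U * ?U) $$ (a,b) = 1\<^sub>m (2*N) $$ (a,b)" using cinner_J_basis[OF o a b] a b by simp
  qed auto
  moreover from this have "?U * ctrans_mat ?U = 1\<^sub>m (2*N)"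
    by (rule mat_mult_left_right_inverse[OF ctrans_mat_carrier[OF J_basis_mat_carrier] J_basis_mat_carrier])
  ultimately show ?thesis unfolding unitary_mat_def by simp
qed

lemma symplectic_J_basis_mat:
  assumes o: "J_orthonormal N u N"
  shows "transpose_mat (J_basis_mat N u) * Zmat N * J_basis_mat N u = Zmat N"
proof (rule eq_matI)
  let ?U = "J_basis_mat N u"
  fix a b assume "a < dim_row (Zmat N)" "b < dim_col (Zmat N)"
  then have a: "a < 2*N" and b: "b < 2*N" by auto
  have UZ: "transpose_mat ?U * Zmat N \<in> carrier_mat (2*N) (2*N)"
    by (intro mult_carrier_mat[OF _ Zmat_carrier]) auto
  have UZ_index: "(transpose_mat ?U * Zmat N) $$ (a,l) =
      (if l < N then - J_basis N u a $ (l+N) else J_basis N u a $ (l-N))" if l: "l < 2*N" for l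
  proof -
    have "(transpose_mat ?U * Zmat N) $$ (a,l) = (\<Sum>i<2*N. J_basis N u a $ i * Zmat N $$ (i,l))"
      using a by (subst index_mult_mat_sum[OF _ Zmat_carrier a l]) (auto intro!: sum.cong)
    then show ?thesis by (simp add: sum_mult_Zmat_right[OF l])
  qed
  have "(transpose_mat ?U * Zmat N * ?U) $$ (a,b) =
      (\<Sum>l<N. - J_basis N u a $ (l+N) * J_basis N u b $ l) + (\<Sum>l<N. J_basis N u a $ l * J_basis N u b $ (l+N))"
    unfolding index_mult_mat_sum[OF UZ J_basis_mat_carrier a b] sum_lessThan_double using b
    by (simp add: UZ_index)
  also have "\<dots> = cinner (2*N) (J_vec N (J_basis N u a)) (J_basis N u b)" by (simp add: cinner_J_expand)
  also have "\<dots> = Zmat N $$ (a,b)"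
  proof (cases "a < N")
    case True
    then show ?thesis using J_orthonormalD[OF o, of a] J_orthonormalD[OF o, of "b-N"] b a
      unfolding J_basis_def by (auto simp: index_Zmat)
  next
    case False
    then have "cinner (2*N) (J_vec N (J_basis N u a)) (J_basis N u b) = - cinner (2*N) (u (a-N)) (J_basis N u b)"
      by (simp add: J_basis_def cinner_J_J_left)
    then show ?thesis using J_orthonormalD[OF o, of "a-N"] J_orthonormalD[OF o, of _ "a-N"] b a False
      unfolding J_basis_def by (auto simp: index_Zmat)
  qed
  finally show "(transpose_mat ?U * Zmat N * ?U) $$ (a,b) = Zmat N $$ (a,b)" .
qed simp_all

lemma symplectic_unitary_J_basis_mat:
  "J_orthonormal N u N \<Longrightarrow> symplectic_unitary N (J_basis_mat N u)"
  unfolding symplectic_unitary_def using unitary_J_basis_mat symplectic_J_basis_mat by auto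

lemma index_ctrans_J_basis_mat_conj:
  assumes X: "X \<in> carrier_mat (2*N) (2*N)" and o: "J_orthonormal N u N"
    and a: "a < 2*N" and b: "b < 2*N"
  shows "(ctrans_mat (J_basis_mat N u) * X * J_basis_mat N u) $$ (a,b) =
    cinner (2*N) (J_basis N u a) (X *\<^sub>v J_basis N u b)"
proof -
  let ?U = "J_basis_mat N u"
  have XU: "(X * ?U) $$ (i,b) = (X *\<^sub>v J_basis N u b) $ i" if i: "i < 2*N" for i
    unfolding index_mult_mat_sum[OF X J_basis_mat_carrier i b]
      index_mult_mat_vec_sum[OF X J_basis_carrier[OF o b] i]
    using b by (intro sum.cong) auto
  have XUc: "X * ?U \<in> carrier_mat (2*N) (2*N)" using X by simp
  have "ctrans_mat ?U * X * ?U = ctrans_mat ?U * (X * ?U)"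
    by (rule assoc_mult_mat[OF ctrans_mat_carrier[OF J_basis_mat_carrier] X J_basis_mat_carrier])
  then have "(ctrans_mat ?U * X * ?U) $$ (a,b) = (\<Sum>i<2*N. ctrans_mat ?U $$ (a,i) * (X * ?U) $$ (i,b))"
    using index_mult_mat_sum[OF ctrans_mat_carrier[OF J_basis_mat_carrier] XUc a b] by simp
  then show ?thesis unfolding cinner_def using a XU by (auto intro!: sum.cong)
qed

text \<open>Because \<open>X\<close> commutes with \<open>J\<close>, the four \<open>N \<times> N\<close> blocks of \<open>U\<^sup>* X U\<close> are determined by
  the entries \<open>\<langle>u\<^sub>a, X u\<^sub>b\<rangle>\<close> and \<open>\<langle>u\<^sub>a, X J u\<^sub>b\<rangle>\<close>.\<close>

lemma ctrans_J_basis_mat_conj_blocks: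
  assumes q: "quaternionic_mat N X" and o: "J_orthonormal N u N"
  defines "T \<equiv> mat N N (\<lambda>(a,b). cinner (2*N) (u a) (X *\<^sub>v u b))"
    and "S \<equiv> mat N N (\<lambda>(a,b). cinner (2*N) (u a) (X *\<^sub>v J_vec N (u b)))"
  shows "ctrans_mat (J_basis_mat N u) * X * J_basis_mat N u = four_block_mat T S (- conj_mat S) (conj_mat T)"
proof (rule eq_matI)
  have X: "X \<in> carrier_mat (2*N) (2*N)" using quaternionic_mat_carrier[OF q] .
  have uc: "\<And>c. c < N \<Longrightarrow> u c \<in> carrier_vec (2*N)" using J_orthonormal_carrier[OF o] .
  fix a b assume "a < dim_row (four_block_mat T S (- conj_mat S) (conj_mat T))"
    "b < dim_col (four_block_mat T S (- conj_mat S) (conj_mat T))"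
  then have a: "a < 2*N" and b: "b < 2*N" by (auto simp: T_def S_def conj_mat_def)
  note e = index_ctrans_J_basis_mat_conj[OF X o a b]
  show "(ctrans_mat (J_basis_mat N u) * X * J_basis_mat N u) $$ (a,b) =
      four_block_mat T S (- conj_mat S) (conj_mat T) $$ (a,b)"
  proof (cases "a < N"; cases "b < N")
    assume 1: "\<not> a < N" "b < N"
    have "cinner (2*N) (J_vec N (u (a-N))) (X *\<^sub>v u b) = - cnj (cinner (2*N) (u (a-N)) (X *\<^sub>v J_vec N (u b)))"
      using quaternionic_mult_J_vec[OF q uc[OF 1(2)]] cinner_J_right[of N "u (a-N)" "X *\<^sub>v u b"] by simp
    then show ?thesis using e a b 1 by (simp add: J_basis_def conj_mat_def T_def S_def)
  next
    assume 1: "\<not> a < N" "\<not> b < N"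
    have "cinner (2*N) (J_vec N (u (a-N))) (X *\<^sub>v J_vec N (u (b-N))) = cnj (cinner (2*N) (u (a-N)) (X *\<^sub>v u (b-N)))"
      using quaternionic_mult_J_vec[OF q uc[of "b-N"]] b 1 cinner_J_J[of N "u (a-N)" "X *\<^sub>v u (b-N)"]
        cinner_commute[of "2*N" "X *\<^sub>v u (b-N)"] by simp
    then show ?thesis using e a b 1 by (simp add: J_basis_def conj_mat_def T_def S_def)
  qed (use e a b in \<open>simp_all add: J_basis_def conj_mat_def T_def S_def\<close>)
next
  show "dim_row (ctrans_mat (J_basis_mat N u) * X * J_basis_mat N u) =
      dim_row (four_block_mat T S (- conj_mat S) (conj_mat T))"
    "dim_col (ctrans_mat (J_basis_mat N u) * X * J_basis_mat N u) =
      dim_col (four_block_mat T S (- conj_mat S) (conj_mat T))"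
    by (simp_all add: T_def S_def conj_mat_def)
qed

lemma J_flag_cinner_eq_0:
  assumes f: "J_flag N X k N u" and j: "j < k" and a: "a < N" and b: "b < N"
  shows "b < a \<Longrightarrow> cinner (2*N) (u a) (X j *\<^sub>v u b) = 0"
    and "b \<le> a \<Longrightarrow> cinner (2*N) (J_vec N (u a)) (X j *\<^sub>v u b) = 0"
proof -
  have o: "J_orthonormal N u N" using J_flag_J_orthonormal[OF f] .
  obtain \<alpha> where ev: "X j *\<^sub>v u b = J_proj N u b (X j *\<^sub>v u b) + \<alpha> \<cdot>\<^sub>v u b"
    using f j b unfolding J_flag_def by auto
  have ub: "u b \<in> carrier_vec (2*N)" using J_orthonormal_carrier[OF o b] .
  let ?p = "J_proj N u b (X j *\<^sub>v u b)"
  show "cinner (2*N) (u a) (X j *\<^sub>v u b) = 0" if ba: "b < a"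
  proof -
    have "cinner (2*N) (u a) ?p = 0"
      unfolding cinner_J_proj_right using J_orthonormalD[OF o] a b ba by (intro sum.neutral) auto
    then show ?thesis
      using J_orthonormalD(1)[OF o a b] ba by (subst ev) (simp add: ub cinner_add_right cinner_smult_right)
  qed
  show "cinner (2*N) (J_vec N (u a)) (X j *\<^sub>v u b) = 0" if ba: "b \<le> a"
  proof -
    have "cinner (2*N) (J_vec N (u a)) ?p = 0"
      unfolding cinner_J_proj_right using J_orthonormalD[OF o] a b ba by (intro sum.neutral) auto
    then show ?thesis
      using J_orthonormalD(2)[OF o a b] by (subst ev) (simp add: ub cinner_add_right cinner_smult_right)
  qed
qed

lemma J_flag_triangular_form:
  assumes f: "J_flag N X k N u" and j: "j < k" and q: "quaternionic_mat N (X j)"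
  shows "\<exists>T S. T \<in> carrier_mat N N \<and> S \<in> carrier_mat N N \<and>
    upper_triangular T \<and> strictly_upper_triangular S \<and>
    ctrans_mat (J_basis_mat N u) * X j * J_basis_mat N u = four_block_mat T S (- conj_mat S) (conj_mat T)"
proof -
  have o: "J_orthonormal N u N" using J_flag_J_orthonormal[OF f] .
  let ?T = "mat N N (\<lambda>(a,b). cinner (2*N) (u a) (X j *\<^sub>v u b))"
  let ?S = "mat N N (\<lambda>(a,b). cinner (2*N) (u a) (X j *\<^sub>v J_vec N (u b)))"
  have "upper_triangular ?T"
    unfolding upper_triangular_def using J_flag_cinner_eq_0(1)[OF f j] by auto
  moreover have "strictly_upper_triangular ?S"
    unfolding strictly_upper_triangular_def
  proof (intro allI impI)
    fix a b assume a: "a < dim_row ?S" and ba: "b \<le> a" and b: "b < dim_col ?S"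
    have "cinner (2*N) (u a) (X j *\<^sub>v J_vec N (u b)) = - cnj (cinner (2*N) (J_vec N (u a)) (X j *\<^sub>v u b))"
      using quaternionic_mult_J_vec[OF q J_orthonormal_carrier[OF o]] b cinner_J_right[of N "u a"] by simp
    then show "?S $$ (a,b) = 0" using J_flag_cinner_eq_0(2)[OF f j, of a b] a b ba by simp
  qed
  ultimately show ?thesis
    using ctrans_J_basis_mat_conj_blocks[OF q o] by (intro exI[of _ ?T] exI[of _ ?S]) auto
qed

text \<open>For normal \<open>A\<close>, \<open>\<parallel>(A\<^sup>* - cnj \<mu>) v\<parallel> = \<parallel>(A - \<mu>) v\<parallel>\<close>.\<close>

lemma normal_eigenvector_ctrans:
  assumes A: "A \<in> carrier_mat n n" and nA: "normal_mat A"
    and v: "v \<in> carrier_vec n" and ev: "A *\<^sub>v v = \<mu> \<cdot>\<^sub>v v"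
  shows "ctrans_mat A *\<^sub>v v = cnj \<mu> \<cdot>\<^sub>v v"
proof -
  define w where "w = ctrans_mat A *\<^sub>v v"
  have wc: "w \<in> carrier_vec n" unfolding w_def using ctrans_mat_carrier[OF A] v by simp
  define P where "P = cinner n v v"
  have Pr: "cnj P = P" unfolding P_def using cinner_commute[of n v v] by simp
  have wv: "cinner n w v = \<mu> * P"
    unfolding w_def P_def using cinner_adjoint_right[OF A v v] ev cinner_smult_right[OF v] by simp
  have vw: "cinner n v w = cnj \<mu> * P" using wv cinner_commute[of n v w] Pr by simp
  have "A *\<^sub>v w = (A * ctrans_mat A) *\<^sub>v v"
    unfolding w_def using assoc_mult_mat_vec[OF A ctrans_mat_carrier[OF A] v] by simp
  also have "\<dots> = ctrans_mat A *\<^sub>v (A *\<^sub>v v)"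
    using nA assoc_mult_mat_vec[OF ctrans_mat_carrier[OF A] A v] unfolding normal_mat_def by simp
  also have "\<dots> = \<mu> \<cdot>\<^sub>v w" unfolding ev w_def using mult_mat_vec[OF ctrans_mat_carrier[OF A] v] by simp
  finally have Aw: "A *\<^sub>v w = \<mu> \<cdot>\<^sub>v w" .
  have ww: "cinner n w w = \<mu> * cnj \<mu> * P"
    using cinner_adjoint_right[OF A wc v] cinner_smult_right[OF wc] vw unfolding Aw w_def[symmetric]
    by (simp add: mult.assoc)
  define z where "z = w - cnj \<mu> \<cdot>\<^sub>v v"
  have zc: "z \<in> carrier_vec n" unfolding z_def using wc v by simp
  have sv: "cnj \<mu> \<cdot>\<^sub>v v \<in> carrier_vec n" using v by simp
  have z_left: "cinner n z y = cinner n w y - \<mu> * cinner n v y" for y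
  proof -
    have "cinner n y z = cinner n y w - cnj \<mu> * cinner n y v"
      unfolding z_def using cinner_diff_right[OF wc sv] cinner_smult_right[OF v] by simp
    then show ?thesis using cinner_commute[of n z y] cinner_commute[of n w y] cinner_commute[of n v y] by simp
  qed
  have "cinner n z z = cinner n z w - cnj \<mu> * cinner n z v"
    by (subst (2) z_def) (simp add: cinner_diff_right[OF wc sv] cinner_smult_right[OF v])
  also have "\<dots> = 0" unfolding z_left using wv vw ww P_def by (simp add: algebra_simps)
  finally have "z = 0\<^sub>v n" using cinner_self_eq_0[OF zc] by simp
  then show ?thesis
    using wc v unfolding w_def[symmetric] z_def by (metis eq_vecI index_minus_vec(1,2) index_zero_vec(1)
        carrier_vecD index_smult_vec(2) right_minus_eq)
qed

lemma J_flag_normal_eigenvectors: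
  assumes h: "quaternionic_commuting N X k" and nm: "\<forall>j<k. normal_mat (X j)"
    and f: "J_flag N X k N u" and b: "b < N" and j: "j < k"
  shows "\<exists>\<alpha>. X j *\<^sub>v u b = \<alpha> \<cdot>\<^sub>v u b"
  using b j
proof (induction b arbitrary: j rule: less_induct)
  case (less b)
  have o: "J_orthonormal N u N" using J_flag_J_orthonormal[OF f] .
  have uc: "\<And>c. c < N \<Longrightarrow> u c \<in> carrier_vec (2*N)" using J_orthonormal_carrier[OF o] .
  have q: "quaternionic_mat N (X j)" using h less.prems(2) unfolding quaternionic_commuting_def by auto
  have X: "X j \<in> carrier_mat (2*N) (2*N)" using quaternionic_mat_carrier[OF q] .
  obtain \<alpha> where ev: "X j *\<^sub>v u b = J_proj N u b (X j *\<^sub>v u b) + \<alpha> \<cdot>\<^sub>v u b"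
    using f less.prems unfolding J_flag_def by auto
  have ub: "u b \<in> carrier_vec (2*N)" using uc less.prems(1) .
  have z: "cinner (2*N) (u c) (X j *\<^sub>v u b) = 0 \<and> cinner (2*N) (J_vec N (u c)) (X j *\<^sub>v u b) = 0"
    if cb: "c < b" for c
  proof -
    have cN: "c < N" using cb less.prems(1) by simp
    obtain \<mu> where \<mu>: "X j *\<^sub>v u c = \<mu> \<cdot>\<^sub>v u c" using less.IH[OF cb cN less.prems(2)] by auto
    have adj: "ctrans_mat (X j) *\<^sub>v u c = cnj \<mu> \<cdot>\<^sub>v u c"
      using normal_eigenvector_ctrans[OF X _ uc[OF cN] \<mu>] nm less.prems(2) by simp
    have "cinner (2*N) (u c) (X j *\<^sub>v u b) = \<mu> * cinner (2*N) (u c) (u b)"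
      using cinner_adjoint_right[OF X ub uc[OF cN]] cinner_smult_left[OF uc[OF cN]] adj by simp
    moreover have "cinner (2*N) (u c) (X j *\<^sub>v J_vec N (u b)) = \<mu> * cinner (2*N) (u c) (J_vec N (u b))"
      using cinner_adjoint_right[OF X J_vec_carrier uc[OF cN]] cinner_smult_left[OF uc[OF cN]] adj by simp
    ultimately show ?thesis
      using J_orthonormalD(1,3)[OF o cN less.prems(1)] J_orthonormalD(3)[OF o less.prems(1) cN] cb
        cinner_J_left[of N "u c" "X j *\<^sub>v u b"] quaternionic_mult_J_vec[OF q ub] by auto
  qed
  have "J_proj N u b (X j *\<^sub>v u b) = 0\<^sub>v (2*N)"
    unfolding J_proj_def using z by (intro eq_vecI) auto
  then show ?case using ev ub by auto
qed

lemma J_flag_diagonal_form: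
  assumes h: "quaternionic_commuting N X k" and nm: "\<forall>j<k. normal_mat (X j)"
    and f: "J_flag N X k N u" and j: "j < k"
  shows "\<exists>D. D \<in> carrier_mat N N \<and> diagonal_mat D \<and>
    ctrans_mat (J_basis_mat N u) * X j * J_basis_mat N u = four_block_mat D (0\<^sub>m N N) (0\<^sub>m N N) (conj_mat D)"
proof -
  have q: "quaternionic_mat N (X j)" using h j unfolding quaternionic_commuting_def by auto
  have o: "J_orthonormal N u N" using J_flag_J_orthonormal[OF f] .
  have uc: "\<And>c. c < N \<Longrightarrow> u c \<in> carrier_vec (2*N)" using J_orthonormal_carrier[OF o] .
  let ?T = "mat N N (\<lambda>(a,b). cinner (2*N) (u a) (X j *\<^sub>v u b))"
  let ?S = "mat N N (\<lambda>(a,b). cinner (2*N) (u a) (X j *\<^sub>v J_vec N (u b)))"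
  have ev: "\<And>b. b < N \<Longrightarrow> \<exists>\<alpha>. X j *\<^sub>v u b = \<alpha> \<cdot>\<^sub>v u b"
    using J_flag_normal_eigenvectors[OF h nm f _ j] by blast
  have "diagonal_mat ?T" unfolding diagonal_mat_def
  proof (intro allI impI)
    fix a b assume a: "a < dim_row ?T" and b: "b < dim_col ?T" and ab: "a \<noteq> b"
    obtain \<alpha> where "X j *\<^sub>v u b = \<alpha> \<cdot>\<^sub>v u b" using ev b by auto
    then show "?T $$ (a,b) = 0"
      using a b ab J_orthonormalD(1)[OF o, of a b] cinner_smult_right[OF uc[of b]] by simp
  qed
  moreover have "?S = 0\<^sub>m N N"
  proof (rule eq_matI)
    fix a b assume "a < dim_row (0\<^sub>m N N :: complex mat)" "b < dim_col (0\<^sub>m N N :: complex mat)"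
    then have a: "a < N" and b: "b < N" by auto
    obtain \<alpha> where "X j *\<^sub>v u b = \<alpha> \<cdot>\<^sub>v u b" using ev b by auto
    then have "X j *\<^sub>v J_vec N (u b) = cnj \<alpha> \<cdot>\<^sub>v J_vec N (u b)"
      using quaternionic_mult_J_vec[OF q uc[OF b]] J_vec_smult[OF uc[OF b]] by simp
    then show "?S $$ (a,b) = 0\<^sub>m N N $$ (a,b)"
      using a b cinner_smult_right[OF J_vec_carrier] J_orthonormalD(3)[OF o b a] by simp
  qed auto
  moreover have "- conj_mat (0\<^sub>m N N) = (0\<^sub>m N N :: complex mat)"
    by (intro eq_matI) (auto simp: conj_mat_def)
  ultimately show ?thesis using ctrans_J_basis_mat_conj_blocks[OF q o] by (intro exI[of _ ?T]) auto
qed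

section \<open>Simultaneous normal forms and the determinant\<close>

lemma quaternionic_commuting_if_ctrans_eq_sharp:
  fixes X :: "nat \<Rightarrow> complex mat"
  assumes "\<forall>j<k. X j \<in> carrier_mat (2 * N) (2 * N)" "\<forall>i<k. \<forall>j<k. X i * X j = X j * X i"
    "\<forall>j<k. ctrans_mat (X j) = sharp N (X j)"
  shows "quaternionic_commuting N X k"
  using assms quaternionic_if_ctrans_eq_sharp unfolding quaternionic_commuting_def by blast

lemma simultaneous_triangular_form:
  fixes X :: "nat \<Rightarrow> complex mat"
  assumes "\<forall>j<k. X j \<in> carrier_mat (2 * N) (2 * N)" "\<forall>i<k. \<forall>j<k. X i * X j = X j * X i"
    "\<forall>j<k. ctrans_mat (X j) = sharp N (X j)"
  shows "\<exists>U. symplectic_unitary N U \<and>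
    (\<forall>j<k. \<exists>T S. T \<in> carrier_mat N N \<and> S \<in> carrier_mat N N \<and>
       upper_triangular T \<and> strictly_upper_triangular S \<and>
       ctrans_mat U * X j * U = four_block_mat T S (- conj_mat S) (conj_mat T))"
proof -
  have h: "quaternionic_commuting N X k" using quaternionic_commuting_if_ctrans_eq_sharp[OF assms] .
  obtain u where f: "J_flag N X k N u" using J_flag_exists[OF h] by blast
  show ?thesis
    using symplectic_unitary_J_basis_mat[OF J_flag_J_orthonormal[OF f]] J_flag_triangular_form[OF f]
      h unfolding quaternionic_commuting_def by blast
qed

lemma simultaneous_diagonal_form:
  fixes X :: "nat \<Rightarrow> complex mat"
  assumes "\<forall>j<k. X j \<in> carrier_mat (2 * N) (2 * N)" "\<forall>i<k. \<forall>j<k. X i * X j = X j * X i"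
    "\<forall>j<k. ctrans_mat (X j) = sharp N (X j)" and nm: "\<forall>j<k. normal_mat (X j)"
  shows "\<exists>U. symplectic_unitary N U \<and>
    (\<forall>j<k. \<exists>D. D \<in> carrier_mat N N \<and> diagonal_mat D \<and>
       ctrans_mat U * X j * U = four_block_mat D (0\<^sub>m N N) (0\<^sub>m N N) (conj_mat D))"
proof -
  have h: "quaternionic_commuting N X k" using quaternionic_commuting_if_ctrans_eq_sharp[OF assms(1-3)] .
  obtain u where f: "J_flag N X k N u" using J_flag_exists[OF h] by blast
  show ?thesis
    using symplectic_unitary_J_basis_mat[OF J_flag_J_orthonormal[OF f]] J_flag_diagonal_form[OF h nm f]
    by blast
qed

lemma symplectic_unitary_ctrans_eq_sharp:
  assumes s: "symplectic_unitary N U" shows "ctrans_mat U = sharp N U"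
proof -
  have U: "U \<in> carrier_mat (2*N) (2*N)" and UU: "U * ctrans_mat U = 1\<^sub>m (2*N)"
    and sy: "transpose_mat U * Zmat N * U = Zmat N"
    using s unfolding symplectic_unitary_def unitary_mat_def by auto
  have Uc: "ctrans_mat U \<in> carrier_mat (2*N) (2*N)" using U by simp
  have UT: "transpose_mat U \<in> carrier_mat (2*N) (2*N)" using U by simp
  have UTZ: "transpose_mat U * Zmat N \<in> carrier_mat (2*N) (2*N)" using UT by simp
  have "transpose_mat U * Zmat N = (transpose_mat U * Zmat N) * (U * ctrans_mat U)"
    unfolding UU using UTZ by simp
  also have "\<dots> = Zmat N * ctrans_mat U"
    using assoc_mult_mat[OF UTZ U Uc] sy by simp
  finally have UZ: "transpose_mat U * Zmat N = Zmat N * ctrans_mat U" .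
  have "Zmat N * transpose_mat U * Zmat N = (Zmat N * Zmat N) * ctrans_mat U"
    using assoc_mult_mat[OF Zmat_carrier UT Zmat_carrier] assoc_mult_mat[OF Zmat_carrier Zmat_carrier Uc]
    unfolding UZ by simp
  also have "\<dots> = - ctrans_mat U"
    unfolding Zmat_squared using Uc by (subst uminus_mult_left_mat) (auto simp: carrier_matD[OF Uc])
  finally show ?thesis unfolding sharp_def by simp
qed

lemma det_conj_mat: "det (conj_mat A) = cnj (det A)"
proof -
  interpret comm_ring_hom cnj by unfold_locales auto
  show ?thesis unfolding conj_mat_def by (rule hom_det)
qed

lemma det_ctrans_mat: "A \<in> carrier_mat n n \<Longrightarrow> det (ctrans_mat A) = cnj (det A)"
  unfolding ctrans_mat_def by (simp add: det_transpose det_conj_mat[unfolded conj_mat_def] conj_mat_def)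

lemma cnj_det_mult_det_unitary:
  assumes "unitary_mat n U" shows "cnj (det U) * det U = 1"
proof -
  have U: "U \<in> carrier_mat n n" and "ctrans_mat U * U = 1\<^sub>m n" using assms unfolding unitary_mat_def by auto
  then show ?thesis using det_mult[OF ctrans_mat_carrier[OF U] U] det_ctrans_mat[OF U] by simp
qed

lemma det_symplectic_unitary:
  assumes s: "symplectic_unitary N U" shows "det U = 1"
proof -
  have unitary: "unitary_mat (2*N) U" using s unfolding symplectic_unitary_def by simp
  then have U: "U \<in> carrier_mat (2*N) (2*N)" and "normal_mat U"
    unfolding unitary_mat_def normal_mat_def by auto
  then obtain V D where V: "symplectic_unitary N V" and D: "D \<in> carrier_mat N N"
    and VUV: "ctrans_mat V * U * V = four_block_mat D (0\<^sub>m N N) (0\<^sub>m N N) (conj_mat D)"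
    using simultaneous_diagonal_form[of 1 "\<lambda>_. U" N] symplectic_unitary_ctrans_eq_sharp[OF s] by auto
  have Vu: "unitary_mat (2*N) V" and Vc: "V \<in> carrier_mat (2*N) (2*N)"
    using V unfolding symplectic_unitary_def unitary_mat_def by auto
  have "det (ctrans_mat V * U * V) = (cnj (det V) * det V) * det U"
    using det_mult[OF mult_carrier_mat[OF ctrans_mat_carrier[OF Vc] U] Vc]
      det_mult[OF ctrans_mat_carrier[OF Vc] U] det_ctrans_mat[OF Vc] by simp
  also have "\<dots> = det U" using cnj_det_mult_det_unitary[OF Vu] by simp
  also have "det (ctrans_mat V * U * V) = det D * cnj (det D)"
    unfolding VUV using D by (subst det_four_block_mat_lower_left_zero[OF D _ refl]) (auto simp: det_conj_mat)
  finally have dU: "det U = of_real ((cmod (det D))^2)" by (metis complex_norm_square)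
  then have "((cmod (det D))^2)^2 = 1"
    using cnj_det_mult_det_unitary[OF unitary] by (simp add: power2_eq_square flip: of_real_mult)
  then have "(cmod (det D))^2 = 1" by (smt (verit) power2_eq_1_iff zero_le_power2)
  then show ?thesis unfolding dU by simp
qed

theorem mainTheorem1:
  fixes N :: nat
  shows
   "(\<forall>(k::nat) (X :: nat \<Rightarrow> complex mat).
       (\<forall>j<k. X j \<in> carrier_mat (2 * N) (2 * N)) \<and>
       (\<forall>i<k. \<forall>j<k. X i * X j = X j * X i) \<and>
       (\<forall>j<k. ctrans_mat (X j) = sharp N (X j)) \<longrightarrow>
       (\<exists>U. symplectic_unitary N U \<and>
          (\<forall>j<k. \<exists>T S. T \<in> carrier_mat N N \<and> S \<in> carrier_mat N N \<and>
             upper_triangular T \<and> strictly_upper_triangular S \<and>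
             ctrans_mat U * X j * U = four_block_mat T S (- conj_mat S) (conj_mat T))))
    \<and>
    (\<forall>(k::nat) (X :: nat \<Rightarrow> complex mat).
       (\<forall>j<k. X j \<in> carrier_mat (2 * N) (2 * N)) \<and>
       (\<forall>i<k. \<forall>j<k. X i * X j = X j * X i) \<and>
       (\<forall>j<k. ctrans_mat (X j) = sharp N (X j)) \<and>
       (\<forall>j<k. normal_mat (X j)) \<longrightarrow>
       (\<exists>U. symplectic_unitary N U \<and>
          (\<forall>j<k. \<exists>D. D \<in> carrier_mat N N \<and> diagonal_mat D \<and>
             ctrans_mat U * X j * U = four_block_mat D (0\<^sub>m N N) (0\<^sub>m N N) (conj_mat D))))
    \<and>
    (\<forall>U. symplectic_unitary N U \<longrightarrow> det U = 1)"
  by (intro conjI allI impI; (elim conjE)?;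
      rule simultaneous_triangular_form simultaneous_diagonal_form det_symplectic_unitary; assumption)

end
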